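(* For each $n$, let $p=p_n$ and let $\mathbf X_1,\ldots,\mathbf X_n$ be i.i.d. random vectors in $\mathbb R^p$ whose coordinates have continuous marginal distribution functions $F_1,\ldots,F_p$. Assume $p/n\to y\in(0,\infty)$. Then $$L\big(F^{\boldsymbol\rho_n},F^{\mathbf W_n}\big)\to 0\quad\text{almost surely}.$$
   Context: $\mathbf X_i=(x_{i1},\ldots,x_{ip})^\top$. Ranks $r_{ij}=1+\sum_{k\ne i}I(x_{kj}\le x_{ij})$; standardized ranking matrix $\mathbf R=\big(\sqrt{12/(n^2-1)}\,(r_{ij}-\tfrac{n+1}{2})\big)_{n\times p}$; Spearman's rank correlation matrix $\boldsymbol\rho_n=\frac1n\mathbf R^\top\mathbf R$. $\mathbf A_i=\mathbb E\{\mathrm{sign}(\mathbf X_i-\mathbf X_k)\mid\mathbf X_i\}=(2F_1(x_{i1})-1,\ldots,2F_p(x_{ip})-1)^\top$ ($k\ne i$), and $\mathbf W_n=\frac3n\sum_{i=1}^n\mathbf A_i\mathbf A_i^\top$. $F^{\mathbf H}(x)=\frac1p\sum_i I(\lambda_i(\mathbf H)\le x)$ is the empirical spectral distribution and $L$ the Lévy distance. *)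

theory Defs
  imports "HOL-Probability.Probability" "Jordan_Normal_Form.Char_Poly"
begin

(* For the real symmetric matrices used below,
   all eigenvalues are real, so this is (1/p) #{i. lambda_i(H) <= x}. *)
definition esd :: "real mat \<Rightarrow> real \<Rightarrow> real" where
  "esd H x = (\<Sum>e\<in>{e. poly (char_poly H) e = 0 \<and> e \<le> x}.
                 real (order e (char_poly H))) / real (dim_row H)"

definition levy_dist :: "(real \<Rightarrow> real) \<Rightarrow> (real \<Rightarrow> real) \<Rightarrow> real" where
  "levy_dist F G = Inf {\<epsilon>. \<epsilon> > 0 \<and>
      (\<forall>x. F (x - \<epsilon>) - \<epsilon> \<le> G x \<and> G x \<le> F (x + \<epsilon>) + \<epsilon>)}"

(* Data: x i j = j-th coordinate of the i-th observation, i < n, j < p. *)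
definition rank_ij :: "nat \<Rightarrow> (nat \<Rightarrow> nat \<Rightarrow> real) \<Rightarrow> nat \<Rightarrow> nat \<Rightarrow> real" where
  "rank_ij n x i j = 1 + real (card {k. k < n \<and> k \<noteq> i \<and> x k j \<le> x i j})"

definition rank_mat :: "nat \<Rightarrow> nat \<Rightarrow> (nat \<Rightarrow> nat \<Rightarrow> real) \<Rightarrow> real mat" where
  "rank_mat n p x = mat n p (\<lambda>(i, j).
      sqrt (12 / ((real n)\<^sup>2 - 1)) * (rank_ij n x i j - (real n + 1) / 2))"

definition spearman :: "nat \<Rightarrow> nat \<Rightarrow> (nat \<Rightarrow> nat \<Rightarrow> real) \<Rightarrow> real mat" where
  "spearman n p x = (1 / real n) \<cdot>\<^sub>m (transpose_mat (rank_mat n p x) * rank_mat n p x)"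

definition W_mat :: "nat \<Rightarrow> nat \<Rightarrow> (nat \<Rightarrow> real \<Rightarrow> real) \<Rightarrow> (nat \<Rightarrow> nat \<Rightarrow> real) \<Rightarrow> real mat" where
  "W_mat n p F x = mat p p (\<lambda>(j, l).
      (3 / real n) * (\<Sum>i<n. (2 * F j (x i j) - 1) * (2 * F l (x i l) - 1)))"

end

theory Submission
  imports Defs "HOL-Real_Asymp.Real_Asymp"
begin

text \<open>Both \<open>\<rho>\<^sub>n\<close> and \<open>W\<^sub>n\<close> are Gram matrices \<open>B\<^sup>T B\<close> and \<open>C\<^sup>T C\<close> of \<open>n \<times> p\<close> arrays:
  \<open>B\<close> holds the standardized ranks and \<open>C\<close> the entries \<open>\<surd>3 (2 F\<^sub>j(x\<^sub>i\<^sub>j) - 1)\<close>, both divided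
  by \<open>\<surd>n\<close>.  Since \<open>r\<^sub>i\<^sub>j / n\<close> is the empirical distribution function of column \<open>j\<close> at
  \<open>x\<^sub>i\<^sub>j\<close>, Hoeffding's inequality on a quantile grid and Borel--Cantelli show that almost
  surely the empirical distribution functions of all \<open>p \<asymp> n\<close> columns converge uniformly, so
  \<open>\<parallel>B - C\<parallel>\<^sup>2 = o(p)\<close> while \<open>\<parallel>B\<parallel>\<^sup>2, \<parallel>C\<parallel>\<^sup>2 = O(p)\<close> (Frobenius norms).  A deterministic
  perturbation bound concludes: if \<open>\<parallel>B\<parallel>\<^sup>2, \<parallel>C\<parallel>\<^sup>2 \<le> K p\<close> and
  \<open>\<parallel>B - C\<parallel>\<^sup>2 \<le> \<epsilon>\<^sup>4 p / (16 K)\<close>, then at most \<open>\<epsilon> p\<close> more eigenvalues of \<open>B\<^sup>T B\<close> than of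
  \<open>C\<^sup>T C\<close> lie below \<open>x - \<epsilon>\<close> resp. \<open>x\<close>, so the Levy distance is at most \<open>\<epsilon>\<close>.  That count
  follows from a dimension argument (eigenspaces of \<open>B\<^sup>T B\<close>, \<open>C\<^sup>T C\<close> and \<open>(B - C)\<^sup>T (B - C)\<close>
  of total dimension \<open>> 2p\<close> share a vector \<open>v\<close>) and the triangle inequality for
  \<open>\<parallel>Bv\<parallel>\<close>, \<open>\<parallel>Cv\<parallel>\<close>, \<open>\<parallel>(B - C)v\<parallel>\<close>.\<close>

no_notation Finite_Cartesian_Product.vec_nth (infixl "$" 90)

section \<open>The spectral theorem for real symmetric matrices\<close>

text \<open>Square matrices of size \<open>n\<close> are encoded as functions \<open>nat \<Rightarrow> nat \<Rightarrow> real\<close> on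
  indices below \<open>n\<close>; a family \<open>u\<close> of \<open>n\<close> vectors is such a function whose row \<open>u k\<close> is
  the \<open>k\<close>-th vector.\<close>

definition orthonormal_rows :: "(nat \<Rightarrow> nat \<Rightarrow> real) \<Rightarrow> nat \<Rightarrow> bool" where
  "orthonormal_rows u n \<longleftrightarrow> (\<forall>k<n. \<forall>l<n. (\<Sum>i<n. u k i * u l i) = (if k = l then 1 else 0))"

definition orthonormal_cols :: "(nat \<Rightarrow> nat \<Rightarrow> real) \<Rightarrow> nat \<Rightarrow> bool" where
  "orthonormal_cols u n \<longleftrightarrow> orthonormal_rows (\<lambda>i k. u k i) n"

definition eigenbasis :: "(nat \<Rightarrow> nat \<Rightarrow> real) \<Rightarrow> (nat \<Rightarrow> nat \<Rightarrow> real) \<Rightarrow> (nat \<Rightarrow> real) \<Rightarrow> nat \<Rightarrow> bool" where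
  "eigenbasis A u a n \<longleftrightarrow> (\<forall>k<n. \<forall>i<n. (\<Sum>j<n. A i j * u k j) = a k * u k i)"

lemma orthonormal_rowsD:
  "orthonormal_rows u n \<Longrightarrow> k < n \<Longrightarrow> l < n \<Longrightarrow> (\<Sum>i<n. u k i * u l i) = (if k = l then 1 else 0)"
  unfolding orthonormal_rows_def by blast

lemma orthonormal_colsD:
  "orthonormal_cols u n \<Longrightarrow> i < n \<Longrightarrow> j < n \<Longrightarrow> (\<Sum>k<n. u k i * u k j) = (if i = j then 1 else 0)"
  unfolding orthonormal_cols_def orthonormal_rows_def by blast

lemma eigenbasisD:
  "eigenbasis A u a n \<Longrightarrow> k < n \<Longrightarrow> i < n \<Longrightarrow> (\<Sum>j<n. A i j * u k j) = a k * u k i"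
  unfolding eigenbasis_def by blast

lemma mult_if_delta_right: "q * (if P then 1 else 0) = (if P then q else (0 :: 'a :: semiring_1))"
  by simp

lemma sum_product_bilinear:
  fixes \<alpha> \<beta> :: "nat \<Rightarrow> real"
  assumes "finite I" "finite R" "finite S"
  shows "(\<Sum>i\<in>I. (\<Sum>r\<in>R. \<alpha> r * f r i) * (\<Sum>s\<in>S. \<beta> s * g s i))
       = (\<Sum>r\<in>R. \<Sum>s\<in>S. \<alpha> r * \<beta> s * (\<Sum>i\<in>I. f r i * g s i))"
proof -
  have "(\<Sum>i\<in>I. (\<Sum>r\<in>R. \<alpha> r * f r i) * (\<Sum>s\<in>S. \<beta> s * g s i))
      = (\<Sum>i\<in>I. \<Sum>r\<in>R. \<Sum>s\<in>S. \<alpha> r * \<beta> s * (f r i * g s i))"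
    by (simp add: sum_product algebra_simps)
  also have "\<dots> = (\<Sum>r\<in>R. \<Sum>i\<in>I. \<Sum>s\<in>S. \<alpha> r * \<beta> s * (f r i * g s i))"
    by (rule sum.swap)
  also have "\<dots> = (\<Sum>r\<in>R. \<Sum>s\<in>S. \<Sum>i\<in>I. \<alpha> r * \<beta> s * (f r i * g s i))"
    by (intro sum.cong refl sum.swap)
  also have "\<dots> = (\<Sum>r\<in>R. \<Sum>s\<in>S. \<alpha> r * \<beta> s * (\<Sum>i\<in>I. f r i * g s i))"
    by (simp add: sum_distrib_left)
  finally show ?thesis .
qed

lemma orthonormal_rows_id: "orthonormal_rows (\<lambda>k i. if k = i then 1 else 0) n"
  unfolding orthonormal_rows_def by (simp add: mult_if_delta)

lemma orthonormal_cols_id: "orthonormal_cols (\<lambda>k i. if k = i then 1 else 0) n"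
  unfolding orthonormal_cols_def orthonormal_rows_def by (simp add: mult_if_delta)

lemma orthonormal_rows_mult:
  assumes P: "orthonormal_rows P n" and Q: "orthonormal_rows Q n"
  shows "orthonormal_rows (\<lambda>k i. \<Sum>t<n. P k t * Q t i) n"
  unfolding orthonormal_rows_def
proof (intro allI impI)
  fix k l assume k: "k < n" and l: "l < n"
  have "(\<Sum>i<n. (\<Sum>t<n. P k t * Q t i) * (\<Sum>s<n. P l s * Q s i))
      = (\<Sum>t<n. \<Sum>s<n. P k t * P l s * (\<Sum>i<n. Q t i * Q s i))"
    by (rule sum_product_bilinear) auto
  also have "\<dots> = (\<Sum>t<n. P k t * P l t)"
    by (simp add: orthonormal_rowsD[OF Q] mult_if_delta_right)
  also have "\<dots> = (if k = l then 1 else 0)"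
    using orthonormal_rowsD[OF P k l] .
  finally show "(\<Sum>i<n. (\<Sum>t<n. P k t * Q t i) * (\<Sum>s<n. P l s * Q s i)) = (if k = l then 1 else 0)" .
qed

lemma orthonormal_cols_mult:
  assumes "orthonormal_cols P n" and "orthonormal_cols Q n"
  shows "orthonormal_cols (\<lambda>k i. \<Sum>t<n. P k t * Q t i) n"
proof -
  have "orthonormal_rows (\<lambda>i k. \<Sum>t<n. Q t i * P k t) n"
    using orthonormal_rows_mult[of "\<lambda>i t. Q t i" n "\<lambda>t k. P k t"] assms
    unfolding orthonormal_cols_def by blast
  thus ?thesis unfolding orthonormal_cols_def by (simp add: mult.commute)
qed

definition border_one :: "(nat \<Rightarrow> nat \<Rightarrow> real) \<Rightarrow> nat \<Rightarrow> nat \<Rightarrow> real" where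
  "border_one u k t = (if k = 0 then (if t = 0 then 1 else 0)
                       else if t = 0 then 0 else u (k - 1) (t - 1))"

lemma sum_border_one:
  "(\<Sum>t<Suc m. border_one u k t * f t) = (if k = 0 then f 0 else (\<Sum>r<m. u (k - 1) r * f (Suc r)))"
  unfolding sum.lessThan_Suc_shift by (simp add: border_one_def)

lemma orthonormal_rows_border_one:
  assumes "orthonormal_rows u m"
  shows "orthonormal_rows (border_one u) (Suc m)"
  unfolding orthonormal_rows_def sum_border_one
proof (intro allI impI)
  fix k l assume "k < Suc m" "l < Suc m"
  thus "(if k = 0 then border_one u l 0 else \<Sum>r<m. u (k - 1) r * border_one u l (Suc r))
        = (if k = l then 1 else 0)"
    using orthonormal_rowsD[OF assms, of "k - 1" "l - 1"]
    by (cases k; cases l) (auto simp: border_one_def)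
qed

lemma orthonormal_cols_border_one:
  assumes "orthonormal_cols u m"
  shows "orthonormal_cols (border_one u) (Suc m)"
proof -
  have "(\<lambda>i k. border_one u k i) = border_one (\<lambda>i k. u k i)"
    by (auto simp: fun_eq_iff border_one_def)
  thus ?thesis
    using orthonormal_rows_border_one assms unfolding orthonormal_cols_def by metis
qed

lemma real_symmetric_complex_eigenvalue_real:
  fixes A :: "real mat"
  assumes A: "A \<in> carrier_mat n n"
    and sym: "\<And>i j. i < n \<Longrightarrow> j < n \<Longrightarrow> A $$ (i,j) = A $$ (j,i)"
    and ev: "eigenvalue (map_mat complex_of_real A) z"
  shows "z \<in> \<real>"
proof -
  obtain w where "eigenvector (map_mat complex_of_real A) w z"
    using ev unfolding eigenvalue_def by auto
  hence w: "w \<in> carrier_vec n" and w0: "w \<noteq> 0\<^sub>v n"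
    and eq: "map_mat complex_of_real A *\<^sub>v w = z \<cdot>\<^sub>v w"
    unfolding eigenvector_def using A by auto
  have comp: "(\<Sum>j<n. complex_of_real (A $$ (i,j)) * w $ j) = z * w $ i" if i: "i < n" for i
  proof -
    have "(map_mat complex_of_real A *\<^sub>v w) $ i = (z \<cdot>\<^sub>v w) $ i" using eq by simp
    thus ?thesis using i A w
      by (auto simp: mult_mat_vec_def scalar_prod_def lessThan_atLeast0 intro!: sum.cong)
  qed
  text \<open>The Hermitian form \<open>w\<^sup>* A w\<close> is real since \<open>A\<close> is real symmetric.\<close>
  define S where "S = (\<Sum>i<n. cnj (w $ i) * (\<Sum>j<n. complex_of_real (A $$ (i,j)) * w $ j))"
  define T where "T = (\<Sum>i<n. cnj (w $ i) * w $ i)"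
  have ST: "S = z * T" unfolding S_def T_def using comp
    by (simp add: sum_distrib_left algebra_simps)
  have "cnj S = (\<Sum>i<n. \<Sum>j<n. w $ i * complex_of_real (A $$ (i,j)) * cnj (w $ j))"
    unfolding S_def by (simp add: sum_distrib_left algebra_simps)
  also have "\<dots> = (\<Sum>j<n. \<Sum>i<n. w $ i * complex_of_real (A $$ (i,j)) * cnj (w $ j))"
    by (rule sum.swap)
  also have "\<dots> = S" unfolding S_def
    by (auto simp: sum_distrib_left algebra_simps sym intro!: sum.cong)
  finally have S_real: "cnj S = S" .
  have T: "T = complex_of_real (\<Sum>i<n. (cmod (w $ i))\<^sup>2)"
    unfolding T_def of_real_sum
    by (intro sum.cong refl) (simp only: of_real_power[symmetric] complex_norm_square mult.commute)
  obtain i where "i < n" "w $ i \<noteq> 0" using w w0 by (metis eq_vecI index_zero_vec carrier_vecD)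
  hence "(\<Sum>i<n. (cmod (w $ i))\<^sup>2) > 0" by (intro sum_pos2[of _ i]) auto
  hence "T \<noteq> 0" unfolding T of_real_eq_0_iff by linarith
  moreover have "cnj T = T" unfolding T by simp
  ultimately have "cnj z = z" using S_real ST by (metis complex_cnj_mult mult_right_cancel)
  thus ?thesis using Reals_cnj_iff by blast
qed

lemma real_symmetric_unit_eigenvector:
  fixes A :: "nat \<Rightarrow> nat \<Rightarrow> real"
  assumes n: "n > 0" and sym: "\<And>i j. i < n \<Longrightarrow> j < n \<Longrightarrow> A i j = A j i"
  shows "\<exists>e v. (\<Sum>i<n. (v i)\<^sup>2) = 1 \<and> (\<forall>i<n. (\<Sum>j<n. A i j * v j) = e * v i)"
proof -
  define M where "M = mat n n (\<lambda>(i,j). A i j)"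
  have M: "M \<in> carrier_mat n n" and Mc: "map_mat complex_of_real M \<in> carrier_mat n n"
    unfolding M_def by auto
  have "degree (char_poly (map_mat complex_of_real M)) = n"
    using degree_monic_char_poly[OF Mc] by auto
  hence "\<not> constant (poly (char_poly (map_mat complex_of_real M)))"
    using n by (metis constant_degree not_gr_zero)
  then obtain z where z: "poly (char_poly (map_mat complex_of_real M)) z = 0"
    using fundamental_theorem_of_algebra by blast
  hence "eigenvalue (map_mat complex_of_real M) z"
    using eigenvalue_root_char_poly[OF Mc] by auto
  hence "z \<in> \<real>"
    using real_symmetric_complex_eigenvalue_real[OF M] by (simp add: M_def sym)
  then obtain e where "z = complex_of_real e" by (auto elim: Reals_cases)
  hence "complex_of_real (poly (char_poly M) e) = 0"
    using z by (simp add: of_real_hom.char_poly_hom[OF M] of_real_hom.poly_map_poly)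
  hence "eigenvalue M e" using eigenvalue_root_char_poly[OF M] by simp
  then obtain x where "eigenvector M x e" unfolding eigenvalue_def by auto
  hence x: "x \<in> carrier_vec n" and x0: "x \<noteq> 0\<^sub>v n" and eq: "M *\<^sub>v x = e \<cdot>\<^sub>v x"
    unfolding eigenvector_def M_def by auto
  have ev: "(\<Sum>j<n. A i j * x $ j) = e * x $ i" if "i < n" for i
  proof -
    have "(M *\<^sub>v x) $ i = (e \<cdot>\<^sub>v x) $ i" using eq by simp
    thus ?thesis using that x
      by (auto simp: M_def mult_mat_vec_def scalar_prod_def lessThan_atLeast0 intro!: sum.cong)
  qed
  obtain i0 where "i0 < n" "x $ i0 \<noteq> 0" using x x0 by (metis eq_vecI index_zero_vec carrier_vecD)
  hence s: "(\<Sum>i<n. (x $ i)\<^sup>2) > 0" by (intro sum_pos2[of _ i0]) auto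
  define v where "v i = x $ i / sqrt (\<Sum>i<n. (x $ i)\<^sup>2)" for i
  have "(\<Sum>i<n. (v i)\<^sup>2) = 1"
    unfolding v_def using s by (simp add: power_divide sum_divide_distrib[symmetric])
  moreover have "(\<Sum>j<n. A i j * v j) = e * v i" if "i < n" for i
    unfolding v_def using ev[OF that] by (simp add: sum_divide_distrib[symmetric])
  ultimately show ?thesis by blast
qed

text \<open>The Householder reflection \<open>I - 2 w w\<^sup>T / \<parallel>w\<parallel>\<^sup>2\<close> with \<open>w = v - e\<^sub>0\<close> maps
  \<open>e\<^sub>0\<close> to \<open>v\<close>.\<close>

lemma orthogonal_completion:
  assumes n: "n > 0" and v: "(\<Sum>i<n. (v i)\<^sup>2) = 1"
  shows "\<exists>q. orthonormal_rows q n \<and> orthonormal_cols q n \<and> (\<forall>i<n. q 0 i = v i)"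
proof (cases "v 0 = 1")
  case True
  have "(\<Sum>i<n. (v i)\<^sup>2) = (v 0)\<^sup>2 + (\<Sum>i\<in>{1..<n}. (v i)\<^sup>2)"
    using n by (metis Suc_le_eq atLeast0LessThan sum.atLeast_Suc_lessThan One_nat_def)
  hence "(\<Sum>i\<in>{1..<n}. (v i)\<^sup>2) = 0" using True v by simp
  hence "v i = 0" if "1 \<le> i" "i < n" for i
    using sum_nonneg_eq_0_iff[of "{1..<n}" "\<lambda>i. (v i)\<^sup>2"] that by auto
  hence "\<forall>i<n. (if 0 = i then 1 else 0) = v i" using True by (auto simp: not_less)
  thus ?thesis using orthonormal_rows_id orthonormal_cols_id by blast
next
  case False
  define w where "w i = v i - (if i = 0 then 1 else 0)" for i
  define c where "c = (\<Sum>i<n. (w i)\<^sup>2)"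
  have "c = (\<Sum>i<n. (v i)\<^sup>2 - 2 * (if i = 0 then v i else 0) + (if i = 0 then 1 else 0))"
    unfolding c_def w_def by (intro sum.cong refl) (auto simp: power2_eq_square algebra_simps)
  also have "\<dots> = (\<Sum>i<n. (v i)\<^sup>2) - 2 * (\<Sum>i<n. (if i = 0 then v i else 0)) + 1"
    using n by (simp add: sum.distrib sum_subtractf sum_distrib_left[symmetric])
  finally have c: "c = - 2 * w 0" using v n unfolding w_def by simp
  have c0: "c \<noteq> 0" using c False unfolding w_def by simp
  define t where "t = 2 / c"
  define q where "q k i = (if k = i then 1 else 0) - t * w k * w i" for k i
  have orth: "(\<Sum>i<n. q k i * q l i) = (if k = l then 1 else 0)" if "k < n" "l < n" for k l
  proof -
    have "(\<Sum>i<n. q k i * q l i) = (\<Sum>i<n. (if k = i then 1 else 0) * (if l = i then 1 else 0)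
          - t * w l * ((if k = i then 1 else 0) * w i) - t * w k * ((if l = i then 1 else 0) * w i)
          + t * t * w k * w l * (w i)\<^sup>2)"
      by (intro sum.cong refl) (simp add: q_def algebra_simps power2_eq_square)
    also have "\<dots> = (\<Sum>i<n. (if k = i then 1 else 0) * (if l = i then 1 else 0))
          - t * w l * (\<Sum>i<n. (if k = i then 1 else 0) * w i)
          - t * w k * (\<Sum>i<n. (if l = i then 1 else 0) * w i) + t * t * w k * w l * c"
      by (simp add: sum.distrib sum_subtractf sum_distrib_left c_def)
    also have "\<dots> = (if k = l then 1 else 0) - t * w l * w k - t * w k * w l + t * t * w k * w l * c"
      using that by (simp add: mult_if_delta)
    also have "t * t * w k * w l * c = 2 * t * w k * w l"
      unfolding t_def using c0 by (simp add: field_simps)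
    finally show ?thesis by (simp add: algebra_simps)
  qed
  have "orthonormal_rows q n" unfolding orthonormal_rows_def using orth by auto
  moreover have "(\<lambda>i k. q k i) = q" unfolding q_def by (auto simp: fun_eq_iff mult.commute)
  ultimately have "orthonormal_cols q n" unfolding orthonormal_cols_def by simp
  moreover have "q 0 i = v i" for i
  proof -
    have "t * w 0 = -1" using c c0 unfolding t_def by (simp add: field_simps)
    thus ?thesis unfolding q_def w_def by (auto simp: mult.assoc)
  qed
  ultimately show ?thesis using \<open>orthonormal_rows q n\<close> by blast
qed

lemma orthonormal_expansion:
  assumes q: "orthonormal_cols q n" and i: "i < n"
  shows "z i = (\<Sum>t<n. (\<Sum>j<n. q t j * z j) * q t i)"
proof -
  have "(\<Sum>t<n. (\<Sum>j<n. q t j * z j) * q t i) = (\<Sum>t<n. \<Sum>j<n. q t j * z j * q t i)"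
    by (simp add: sum_distrib_right)
  also have "\<dots> = (\<Sum>j<n. \<Sum>t<n. q t j * z j * q t i)"
    by (rule sum.swap)
  also have "\<dots> = (\<Sum>j<n. (\<Sum>t<n. q t j * q t i) * z j)"
    by (simp add: sum_distrib_left ac_simps)
  also have "\<dots> = z i"
    using i by (simp add: orthonormal_colsD[OF q] mult_if_delta)
  finally show ?thesis by simp
qed

context
  notes sum.lessThan_Suc [simp del]
begin

text \<open>A symmetric \<open>A\<close> maps the orthogonal complement of its eigenvector \<open>q 0\<close> into
  itself; in the basis \<open>q 1, \<dots>, q m\<close> of that complement it acts by the compressed matrix
  \<open>q\<^sup>T A q\<close>.\<close>

lemma symmetric_action_on_complement:
  fixes A q :: "nat \<Rightarrow> nat \<Rightarrow> real"
  assumes sym: "\<And>i j. i < Suc m \<Longrightarrow> j < Suc m \<Longrightarrow> A i j = A j i"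
    and oq: "orthonormal_rows q (Suc m)" and cq: "orthonormal_cols q (Suc m)"
    and ev: "\<And>i. i < Suc m \<Longrightarrow> (\<Sum>j<Suc m. A i j * q 0 j) = e * q 0 i"
    and i: "i < Suc m" and r: "r < m"
  shows "(\<Sum>j<Suc m. A i j * q (Suc r) j)
       = (\<Sum>s<m. (\<Sum>i'<Suc m. \<Sum>j<Suc m. q (Suc s) i' * A i' j * q (Suc r) j) * q (Suc s) i)"
proof -
  define Aq where "Aq i' = (\<Sum>j<Suc m. A i' j * q (Suc r) j)" for i'
  have "(\<Sum>i'<Suc m. q 0 i' * Aq i') = (\<Sum>i'<Suc m. \<Sum>j<Suc m. q 0 i' * A i' j * q (Suc r) j)"
    unfolding Aq_def by (simp add: sum_distrib_left mult.assoc)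
  also have "\<dots> = (\<Sum>j<Suc m. \<Sum>i'<Suc m. q 0 i' * A i' j * q (Suc r) j)"
    by (rule sum.swap)
  also have "\<dots> = (\<Sum>j<Suc m. (\<Sum>i'<Suc m. A j i' * q 0 i') * q (Suc r) j)"
    unfolding sum_distrib_right by (intro sum.cong refl) (simp add: sym ac_simps)
  also have "\<dots> = e * (\<Sum>j<Suc m. q 0 j * q (Suc r) j)"
    by (simp add: ev sum_distrib_left ac_simps)
  also have "\<dots> = 0" using orthonormal_rowsD[OF oq, of 0 "Suc r"] r by simp
  finally have q0_Aq: "(\<Sum>i'<Suc m. q 0 i' * Aq i') = 0" .
  have "Aq i = (\<Sum>t<Suc m. (\<Sum>i'<Suc m. q t i' * Aq i') * q t i)"
    by (rule orthonormal_expansion[OF cq i])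
  also have "\<dots> = (\<Sum>s<m. (\<Sum>i'<Suc m. q (Suc s) i' * Aq i') * q (Suc s) i)"
    by (subst sum.lessThan_Suc_shift) (simp add: q0_Aq)
  finally show ?thesis
    unfolding Aq_def by (simp add: sum_distrib_left mult.assoc)
qed

lemma bilinear_form_symmetric:
  fixes A :: "nat \<Rightarrow> nat \<Rightarrow> 'a :: comm_semiring_0"
  assumes sym: "\<And>i j. i < n \<Longrightarrow> j < n \<Longrightarrow> A i j = A j i"
  shows "(\<Sum>i<n. \<Sum>j<n. x i * A i j * y j) = (\<Sum>i<n. \<Sum>j<n. y i * A i j * x j)"
proof -
  have "(\<Sum>i<n. \<Sum>j<n. x i * A i j * y j) = (\<Sum>j<n. \<Sum>i<n. x i * A i j * y j)"
    by (rule sum.swap)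
  also have "\<dots> = (\<Sum>i<n. \<Sum>j<n. y i * A i j * x j)"
    by (intro sum.cong refl) (simp add: sym ac_simps)
  finally show ?thesis .
qed

lemma eigenvector_lift:
  fixes A q C :: "nat \<Rightarrow> nat \<Rightarrow> real"
  assumes action: "\<And>r. r < m \<Longrightarrow> (\<Sum>j<Suc m. A i j * q (Suc r) j) = (\<Sum>s<m. C s r * q (Suc s) i)"
    and ev: "\<And>s. s < m \<Longrightarrow> (\<Sum>r<m. C s r * y r) = \<beta> * y s"
  shows "(\<Sum>j<Suc m. A i j * (\<Sum>r<m. y r * q (Suc r) j)) = \<beta> * (\<Sum>r<m. y r * q (Suc r) i)"
proof -
  have "(\<Sum>j<Suc m. A i j * (\<Sum>r<m. y r * q (Suc r) j)) = (\<Sum>j<Suc m. \<Sum>r<m. y r * (A i j * q (Suc r) j))"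
    by (simp add: sum_distrib_left ac_simps)
  also have "\<dots> = (\<Sum>r<m. y r * (\<Sum>j<Suc m. A i j * q (Suc r) j))"
    by (subst sum.swap) (simp add: sum_distrib_left)
  also have "\<dots> = (\<Sum>r<m. \<Sum>s<m. C s r * y r * q (Suc s) i)"
    by (simp add: action sum_distrib_left ac_simps)
  also have "\<dots> = (\<Sum>s<m. (\<Sum>r<m. C s r * y r) * q (Suc s) i)"
    by (subst sum.swap) (simp add: sum_distrib_right)
  also have "\<dots> = (\<Sum>s<m. \<beta> * y s * q (Suc s) i)"
    by (intro sum.cong refl) (simp add: ev)
  also have "\<dots> = \<beta> * (\<Sum>s<m. y s * q (Suc s) i)"
    by (simp add: sum_distrib_left ac_simps)
  finally show ?thesis .
qed

theorem real_symmetric_spectral: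
  fixes A :: "nat \<Rightarrow> nat \<Rightarrow> real"
  assumes "\<And>i j. i < n \<Longrightarrow> j < n \<Longrightarrow> A i j = A j i"
  shows "\<exists>u a. orthonormal_rows u n \<and> orthonormal_cols u n \<and> eigenbasis A u a n"
  using assms
proof (induction n arbitrary: A)
  case 0
  show ?case by (simp add: orthonormal_rows_def orthonormal_cols_def eigenbasis_def)
next
  case (Suc m)
  note sym = Suc.prems
  obtain e v where v: "(\<Sum>i<Suc m. (v i)\<^sup>2) = 1"
    and ev: "\<And>i. i < Suc m \<Longrightarrow> (\<Sum>j<Suc m. A i j * v j) = e * v i"
    using real_symmetric_unit_eigenvector[of "Suc m" A] sym by auto
  obtain q where oq: "orthonormal_rows q (Suc m)" and cq: "orthonormal_cols q (Suc m)"
    and q0: "\<And>i. i < Suc m \<Longrightarrow> q 0 i = v i"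
    using orthogonal_completion[of "Suc m" v] v by auto
  have evq: "(\<Sum>j<Suc m. A i j * q 0 j) = e * q 0 i" if "i < Suc m" for i
    using ev[OF that] q0 that by simp
  define C where "C s r = (\<Sum>i<Suc m. \<Sum>j<Suc m. q (Suc s) i * A i j * q (Suc r) j)" for s r
  have "C s r = C r s" for s r
    unfolding C_def by (rule bilinear_form_symmetric[OF sym])
  then obtain y b where oy: "orthonormal_rows y m" and cy: "orthonormal_cols y m"
    and ey: "eigenbasis C y b m"
    using Suc.IH[of C] by blast
  define u where "u k i = (\<Sum>t<Suc m. border_one y k t * q t i)" for k i
  have "orthonormal_rows u (Suc m)" unfolding u_def
    by (intro orthonormal_rows_mult orthonormal_rows_border_one oy oq)
  moreover have "orthonormal_cols u (Suc m)" unfolding u_def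
    by (intro orthonormal_cols_mult orthonormal_cols_border_one cy cq)
  moreover have "eigenbasis A u (\<lambda>k. if k = 0 then e else b (k - 1)) (Suc m)"
    unfolding eigenbasis_def
  proof (intro allI impI)
    fix k i assume k: "k < Suc m" and i: "i < Suc m"
    show "(\<Sum>j<Suc m. A i j * u k j) = (if k = 0 then e else b (k - 1)) * u k i"
    proof (cases k)
      case 0
      thus ?thesis using evq i by (simp add: u_def sum_border_one)
    next
      case (Suc k')
      hence k': "k' < m" using k by simp
      have uk: "u k j = (\<Sum>r<m. y k' r * q (Suc r) j)" for j
        unfolding u_def sum_border_one using Suc by simp
      have "(\<Sum>j<Suc m. A i j * u k j) = b k' * u k i"
        unfolding uk using symmetric_action_on_complement[OF sym oq cq evq i] eigenbasisD[OF ey k']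
        by (intro eigenvector_lift) (simp_all add: C_def)
      thus ?thesis using Suc by simp
    qed
  qed
  ultimately show ?case by blast
qed

end


section \<open>Spectral distribution of a matrix with an orthonormal eigenbasis\<close>

lemma order_prod_linear_factors:
  fixes p :: nat
  shows "order x (\<Prod>k<p. [:- a k, 1:]) = card {k. k < p \<and> a k = (x::real)}"
proof (induction p)
  case 0 thus ?case by simp
next
  case (Suc p)
  have nz1: "(\<Prod>k<p. [:- a k, 1:]) \<noteq> 0" by (simp add: prod_zero_iff)
  have nz2: "[:- a p, 1:] \<noteq> 0" by simp
  have nz: "(\<Prod>k<p. [:- a k, 1:]) * [:- a p, 1:] \<noteq> 0"
    using nz1 nz2 by (simp only: mult_eq_0_iff de_Morgan_disj) simp
  have "order x (\<Prod>k<Suc p. [:- a k, 1:]) = order x (\<Prod>k<p. [:- a k, 1:]) + order x [:- a p, 1:]"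
    unfolding prod.lessThan_Suc by (rule order_mult[OF nz])
  also have "order x [:- a p, 1:] = (if a p = x then 1 else 0)"
    by (simp add: order_linear')
  finally have o: "order x (\<Prod>k<Suc p. [:- a k, 1:]) = order x (\<Prod>k<p. [:- a k, 1:]) + (if a p = x then 1 else 0)" .
  have "{k. k < Suc p \<and> a k = x} = {k. k < p \<and> a k = x} \<union> (if a p = x then {p} else {})"
    by (auto simp: less_Suc_eq)
  hence "card {k. k < Suc p \<and> a k = x} = card {k. k < p \<and> a k = x} + (if a p = x then 1 else 0)"
    by (auto simp: card_insert_if)
  thus ?case using Suc o by simp
qed

lemma esd_split_char_poly:
  assumes cp: "char_poly A = (\<Prod>k<p. [:- a k, 1:])" and dim: "dim_row A = p"
  shows "esd A x = real (card {k. k < p \<and> a k \<le> x}) / real p"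
proof -
  let ?P = "\<Prod>k<p. [:- a k, 1:]"
  have poly0: "poly ?P e = 0 \<longleftrightarrow> (\<exists>k<p. a k = e)" for e
    by (auto simp: poly_prod prod_zero_iff)
  have S: "{e. poly ?P e = 0 \<and> e \<le> x} = a ` {k. k < p \<and> a k \<le> x}"
    using poly0 by auto
  have "(\<Sum>e\<in>{e. poly ?P e = 0 \<and> e \<le> x}. real (order e ?P))
      = real (\<Sum>e\<in>a ` {k. k < p \<and> a k \<le> x}. card {k. k < p \<and> a k = e})"
    unfolding S by (simp add: order_prod_linear_factors)
  also have "(\<Sum>e\<in>a ` {k. k < p \<and> a k \<le> x}. card {k. k < p \<and> a k = e})
      = card (\<Union>e\<in>a ` {k. k < p \<and> a k \<le> x}. {k. k < p \<and> a k = e})"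
    by (rule card_UN_disjoint[symmetric]) auto
  also have "(\<Union>e\<in>a ` {k. k < p \<and> a k \<le> x}. {k. k < p \<and> a k = e}) = {k. k < p \<and> a k \<le> x}"
    by auto
  finally show ?thesis unfolding esd_def cp dim by simp
qed

lemma eigenbasis_decomposition:
  assumes cu: "orthonormal_cols u p" and eu: "eigenbasis A u a p" and i: "i < p" and j: "j < p"
  shows "A i j = (\<Sum>k<p. a k * u k i * u k j)"
proof -
  have "A i j = (\<Sum>l<p. A i l * (if l = j then 1 else 0))" using j by (simp add: mult_if_delta_right)
  also have "\<dots> = (\<Sum>l<p. A i l * (\<Sum>k<p. u k l * u k j))"
    using cu unfolding orthonormal_cols_def orthonormal_rows_def using j by (intro sum.cong refl) auto
  also have "\<dots> = (\<Sum>l<p. \<Sum>k<p. A i l * u k l * u k j)" by (simp add: sum_distrib_left mult.assoc)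
  also have "\<dots> = (\<Sum>k<p. \<Sum>l<p. A i l * u k l * u k j)" by (rule sum.swap)
  also have "\<dots> = (\<Sum>k<p. (\<Sum>l<p. A i l * u k l) * u k j)" by (simp add: sum_distrib_right)
  also have "\<dots> = (\<Sum>k<p. a k * u k i * u k j)"
    using eu i unfolding eigenbasis_def by (intro sum.cong refl) auto
  finally show ?thesis .
qed

lemma char_poly_eigenbasis:
  fixes A :: "real mat"
  assumes A: "A \<in> carrier_mat p p" and ou: "orthonormal_rows u p" and cu: "orthonormal_cols u p"
    and eu: "eigenbasis (\<lambda>i j. A $$ (i,j)) u a p"
  shows "char_poly A = (\<Prod>k<p. [:- a k, 1:])"
proof -
  define U where "U = mat p p (\<lambda>(i,k). u k i)"
  define Ut where "Ut = mat p p (\<lambda>(k,i). u k i)"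
  define D where "D = mat p p (\<lambda>(i,j). if i = j then a i else 0)"
  have U: "U \<in> carrier_mat p p" and Ut: "Ut \<in> carrier_mat p p" and D: "D \<in> carrier_mat p p"
    unfolding U_def Ut_def D_def by auto
  have UUt: "U * Ut = 1\<^sub>m p"
    by (rule eq_matI) (use cu in \<open>auto simp: U_def Ut_def orthonormal_cols_def orthonormal_rows_def scalar_prod_def lessThan_atLeast0\<close>)
  have UtU: "Ut * U = 1\<^sub>m p"
    by (rule eq_matI) (use ou in \<open>auto simp: U_def Ut_def orthonormal_rows_def scalar_prod_def lessThan_atLeast0\<close>)
  have UD: "(U * D) $$ (i,k) = u k i * a k" if "i < p" "k < p" for i k
  proof -
    have "(U * D) $$ (i,k) = (\<Sum>l<p. u l i * (if l = k then a l else 0))"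
      using that by (simp add: U_def D_def scalar_prod_def lessThan_atLeast0)
    also have "\<dots> = u k i * a k" using that
      by (simp add: if_distrib[where f = "\<lambda>x. u _ _ * x"] cong: if_cong)
    finally show ?thesis .
  qed
  have AU: "A = U * D * Ut"
  proof (rule eq_matI)
    fix i j assume i: "i < dim_row (U * D * Ut)" and j: "j < dim_col (U * D * Ut)"
    hence i: "i < p" and j: "j < p" using U Ut by auto
    have "(U * D * Ut) $$ (i,j) = (\<Sum>k<p. (U * D) $$ (i,k) * u k j)"
      using i j U D by (simp add: Ut_def scalar_prod_def lessThan_atLeast0)
    also have "\<dots> = (\<Sum>k<p. a k * u k i * u k j)"
      using UD i by (intro sum.cong refl) auto
    also have "\<dots> = A $$ (i,j)" using eigenbasis_decomposition[OF cu eu i j] by simp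
    finally show "A $$ (i, j) = (U * D * Ut) $$ (i, j)" by simp
  qed (use A U Ut in auto)
  have "similar_mat A D" unfolding similar_mat_def similar_mat_wit_def
    using A U Ut D UUt UtU AU by (intro exI[of _ U] exI[of _ Ut]) (auto simp: Let_def)
  hence "char_poly A = char_poly D" by (rule char_poly_similar)
  also have "\<dots> = (\<Prod>a \<leftarrow> diag_mat D. [:- a, 1:])"
    by (rule char_poly_upper_triangular[OF D]) (auto simp: D_def upper_triangular_def)
  also have "diag_mat D = map a [0..<p]" unfolding D_def diag_mat_def by auto
  also have "(\<Prod>a \<leftarrow> map a [0..<p]. [:- a, 1:]) = (\<Prod>k<p. [:- a k, 1:])"
    by (simp add: prod.distinct_set_conv_list[symmetric] lessThan_atLeast0 o_def)
  finally show ?thesis .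
qed

section \<open>Eigenvalue counts of perturbed Gram matrices\<close>

definition gram :: "nat \<Rightarrow> (nat \<Rightarrow> nat \<Rightarrow> real) \<Rightarrow> nat \<Rightarrow> nat \<Rightarrow> real" where
  "gram n b j l = (\<Sum>i<n. b i j * b i l)"

lemma gram_commute: "gram n b j l = gram n b l j"
  unfolding gram_def by (simp add: mult.commute)

text \<open>One step of Gaussian elimination: a dependence among the vectors with the pivot
  coordinate \<open>N\<close> eliminated lifts to a dependence among the original ones.\<close>

lemma linear_dependence_lift:
  fixes f :: "'t \<Rightarrow> nat \<Rightarrow> real"
  assumes T: "finite T" and t0: "t0 \<in> T" "f t0 N \<noteq> 0"
    and nz: "\<exists>t\<in>T - {t0}. c t \<noteq> 0"
    and dep: "\<forall>i<N. (\<Sum>t\<in>T - {t0}. c t * (f t i - f t N / f t0 N * f t0 i)) = 0"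
  shows "\<exists>c. (\<exists>t\<in>T. c t \<noteq> 0) \<and> (\<forall>i<Suc N. (\<Sum>t\<in>T. c t * f t i) = 0)"
proof -
  define s where "s = (\<Sum>t\<in>T - {t0}. c t * f t N) / f t0 N"
  define c' where "c' t = (if t = t0 then - s else c t)" for t
  have "(\<Sum>t\<in>T. c' t * f t i) = (\<Sum>t\<in>T - {t0}. c t * (f t i - f t N / f t0 N * f t0 i))" for i
  proof -
    have "(\<Sum>t\<in>T. c' t * f t i) = - s * f t0 i + (\<Sum>t\<in>T - {t0}. c t * f t i)"
    proof -
      have "(\<Sum>t\<in>T - {t0}. c' t * f t i) = (\<Sum>t\<in>T - {t0}. c t * f t i)"
        by (intro sum.cong) (auto simp: c'_def)
      thus ?thesis using sum.remove[OF T t0(1), of "\<lambda>t. c' t * f t i"] by (simp add: c'_def)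
    qed
    thus ?thesis unfolding s_def
      by (simp add: algebra_simps sum_subtractf sum_distrib_left sum_distrib_right sum_divide_distrib)
  qed
  moreover have "f t N - f t N / f t0 N * f t0 N = 0" for t using t0 by simp
  ultimately have "\<forall>i<Suc N. (\<Sum>t\<in>T. c' t * f t i) = 0"
    using dep by (auto simp: less_Suc_eq)
  moreover have "\<exists>t\<in>T. c' t \<noteq> 0" using nz unfolding c'_def by (metis DiffE insertI1)
  ultimately show ?thesis by blast
qed

lemma nontrivial_linear_dependence:
  fixes f :: "'t \<Rightarrow> nat \<Rightarrow> real"
  assumes "finite T" "card T > N"
  shows "\<exists>c. (\<exists>t\<in>T. c t \<noteq> 0) \<and> (\<forall>i<N. (\<Sum>t\<in>T. c t * f t i) = 0)"
  using assms
proof (induction N arbitrary: T f)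
  case 0
  thus ?case by (intro exI[of _ "\<lambda>_. 1"]) (auto simp: card_gt_0_iff)
next
  case (Suc N)
  show ?case
  proof (cases "\<forall>t\<in>T. f t N = 0")
    case True
    thus ?thesis using Suc.IH[of T f] Suc.prems by (auto simp: less_Suc_eq)
  next
    case False
    then obtain t0 where t0: "t0 \<in> T" "f t0 N \<noteq> 0" by auto
    have "card (T - {t0}) > N" using Suc.prems t0 by (simp add: card_Diff_singleton)
    thus ?thesis
      using Suc.IH[of "T - {t0}" "\<lambda>t i. f t i - f t N / f t0 N * f t0 i"] Suc.prems(1) t0
      by (auto intro: linear_dependence_lift)
  qed
qed

lemma orthonormal_rows_coeff:
  assumes ou: "orthonormal_rows u p" and I: "I \<subseteq> {..<p}" and k: "k < p"
  shows "(\<Sum>j<p. (\<Sum>k'\<in>I. \<beta> k' * u k' j) * u k j) = (if k \<in> I then \<beta> k else 0)"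
proof -
  have fI: "finite I" using I finite_subset by blast
  have "(\<Sum>j<p. (\<Sum>k'\<in>I. \<beta> k' * u k' j) * u k j) = (\<Sum>j<p. \<Sum>k'\<in>I. \<beta> k' * (u k' j * u k j))"
    by (simp add: sum_distrib_right mult.assoc)
  also have "\<dots> = (\<Sum>k'\<in>I. \<Sum>j<p. \<beta> k' * (u k' j * u k j))" by (rule sum.swap)
  also have "\<dots> = (\<Sum>k'\<in>I. \<beta> k' * (if k' = k then 1 else 0))"
    using ou I k unfolding orthonormal_rows_def by (intro sum.cong refl) (auto simp: sum_distrib_left[symmetric])
  also have "\<dots> = (if k \<in> I then \<beta> k else 0)"
    using fI by (simp add: if_distrib[where f = "\<lambda>x. _ * x"] cong: if_cong)
  finally show ?thesis .
qed

lemma orthonormal_combination_eq_0: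
  assumes "orthonormal_rows u p" "I \<subseteq> {..<p}" "\<And>j. j < p \<Longrightarrow> (\<Sum>k\<in>I. \<beta> k * u k j) = 0" "k \<in> I"
  shows "\<beta> k = 0"
  using orthonormal_rows_coeff[OF assms(1,2), of k \<beta>] assms(2-4) by auto

lemma gram_quadratic_form:
  fixes \<beta> :: "nat \<Rightarrow> real"
  assumes ou: "orthonormal_rows u p" and eu: "eigenbasis (gram n b) u \<alpha> p" and I: "I \<subseteq> {..<p}"
  defines "v \<equiv> \<lambda>j. \<Sum>k\<in>I. \<beta> k * u k j"
  shows "(\<Sum>i<n. (\<Sum>j<p. b i j * v j)\<^sup>2) = (\<Sum>k\<in>I. \<alpha> k * (\<beta> k)\<^sup>2)"
    and "(\<Sum>j<p. (v j)\<^sup>2) = (\<Sum>k\<in>I. (\<beta> k)\<^sup>2)"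
proof -
  have vu: "(\<Sum>j<p. v j * u k j) = \<beta> k" if "k \<in> I" for k
    using orthonormal_rows_coeff[OF ou I, of k \<beta>] that I unfolding v_def by auto
  have Gv: "(\<Sum>l<p. gram n b j l * v l) = (\<Sum>k\<in>I. \<beta> k * \<alpha> k * u k j)" if j: "j < p" for j
  proof -
    have "(\<Sum>l<p. gram n b j l * v l) = (\<Sum>l<p. \<Sum>k\<in>I. \<beta> k * (gram n b j l * u k l))"
      unfolding v_def by (simp add: sum_distrib_left ac_simps)
    also have "\<dots> = (\<Sum>k\<in>I. \<Sum>l<p. \<beta> k * (gram n b j l * u k l))" by (rule sum.swap)
    also have "\<dots> = (\<Sum>k\<in>I. \<beta> k * \<alpha> k * u k j)"
      using eu I j unfolding eigenbasis_def by (intro sum.cong refl) (auto simp: sum_distrib_left[symmetric])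
    finally show ?thesis .
  qed
  have "(\<Sum>i<n. (\<Sum>j<p. b i j * v j)\<^sup>2) = (\<Sum>i<n. \<Sum>j<p. \<Sum>l<p. v j * (b i j * b i l) * v l)"
    by (simp add: power2_eq_square sum_product ac_simps)
  also have "\<dots> = (\<Sum>j<p. \<Sum>i<n. \<Sum>l<p. v j * (b i j * b i l) * v l)" by (rule sum.swap)
  also have "\<dots> = (\<Sum>j<p. \<Sum>l<p. \<Sum>i<n. v j * (b i j * b i l) * v l)" by (intro sum.cong refl sum.swap)
  also have "\<dots> = (\<Sum>j<p. v j * (\<Sum>l<p. gram n b j l * v l))"
    unfolding gram_def by (simp add: sum_distrib_left sum_distrib_right ac_simps)
  also have "\<dots> = (\<Sum>j<p. v j * (\<Sum>k\<in>I. \<beta> k * \<alpha> k * u k j))"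
    using Gv by (intro sum.cong refl) auto
  also have "\<dots> = (\<Sum>k\<in>I. \<beta> k * \<alpha> k * (\<Sum>j<p. v j * u k j))"
    by (simp add: sum_distrib_left ac_simps sum.swap[of _ "{..<p}" I])
  also have "\<dots> = (\<Sum>k\<in>I. \<alpha> k * (\<beta> k)\<^sup>2)"
    using vu by (intro sum.cong refl) (auto simp: power2_eq_square)
  finally show "(\<Sum>i<n. (\<Sum>j<p. b i j * v j)\<^sup>2) = (\<Sum>k\<in>I. \<alpha> k * (\<beta> k)\<^sup>2)" .
  have "(\<Sum>j<p. (v j)\<^sup>2) = (\<Sum>j<p. v j * (\<Sum>k\<in>I. \<beta> k * u k j))"
    by (simp add: power2_eq_square v_def)
  also have "\<dots> = (\<Sum>k\<in>I. \<beta> k * (\<Sum>j<p. v j * u k j))"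
    by (simp add: sum_distrib_left ac_simps sum.swap[of _ "{..<p}" I])
  also have "\<dots> = (\<Sum>k\<in>I. (\<beta> k)\<^sup>2)"
    using vu by (intro sum.cong refl) (auto simp: power2_eq_square)
  finally show "(\<Sum>j<p. (v j)\<^sup>2) = (\<Sum>k\<in>I. (\<beta> k)\<^sup>2)" .
qed


lemma gram_quadratic_form_le:
  assumes ou: "orthonormal_rows u p" and eu: "eigenbasis (gram n b) u \<alpha> p" and I: "I \<subseteq> {..<p}"
    and le: "\<And>k. k \<in> I \<Longrightarrow> \<alpha> k \<le> t"
  shows "(\<Sum>i<n. (\<Sum>j<p. b i j * (\<Sum>k\<in>I. \<beta> k * u k j))\<^sup>2) \<le> t * (\<Sum>j<p. (\<Sum>k\<in>I. \<beta> k * u k j)\<^sup>2)"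
proof -
  have "(\<Sum>k\<in>I. \<alpha> k * (\<beta> k)\<^sup>2) \<le> (\<Sum>k\<in>I. t * (\<beta> k)\<^sup>2)"
    by (intro sum_mono mult_right_mono le) auto
  thus ?thesis unfolding gram_quadratic_form[OF ou eu I] by (simp add: sum_distrib_left)
qed

lemma gram_quadratic_form_ge:
  assumes ou: "orthonormal_rows u p" and eu: "eigenbasis (gram n b) u \<alpha> p" and I: "I \<subseteq> {..<p}"
    and ge: "\<And>k. k \<in> I \<Longrightarrow> t \<le> \<alpha> k"
  shows "t * (\<Sum>j<p. (\<Sum>k\<in>I. \<beta> k * u k j)\<^sup>2) \<le> (\<Sum>i<n. (\<Sum>j<p. b i j * (\<Sum>k\<in>I. \<beta> k * u k j))\<^sup>2)"
proof -
  have "(\<Sum>k\<in>I. t * (\<beta> k)\<^sup>2) \<le> (\<Sum>k\<in>I. \<alpha> k * (\<beta> k)\<^sup>2)"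
    by (intro sum_mono mult_right_mono ge) auto
  thus ?thesis unfolding gram_quadratic_form[OF ou eu I] by (simp add: sum_distrib_left)
qed

lemma sum_card_union_shifted:
  fixes I J S :: "nat set" and p :: nat
  assumes I: "I \<subseteq> {..<p}" and J: "J \<subseteq> {..<p}" and S: "S \<subseteq> {..<p}"
  shows "(\<Sum>t\<in>I \<union> (\<lambda>k. p + k) ` J \<union> (\<lambda>k. 2*p + k) ` S. G t)
       = (\<Sum>k\<in>I. G k) + (\<Sum>k\<in>J. G (p + k)) + (\<Sum>k\<in>S. G (2*p + k))"
    and "card (I \<union> (\<lambda>k. p + k) ` J \<union> (\<lambda>k. 2*p + k) ` S) = card I + card J + card S"
proof -
  have fI: "finite I" and fJ: "finite J" and fS: "finite S"
    using I J S finite_subset by blast+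
  have d1: "I \<inter> (\<lambda>k. p + k) ` J = {}" using I by auto
  have d2: "(I \<union> (\<lambda>k. p + k) ` J) \<inter> (\<lambda>k. 2*p + k) ` S = {}" using I J by auto
  have i1: "inj_on (\<lambda>k. p + k) J" and i2: "inj_on (\<lambda>k. 2*p + k) S" by (auto simp: inj_on_def)
  show "(\<Sum>t\<in>I \<union> (\<lambda>k. p + k) ` J \<union> (\<lambda>k. 2*p + k) ` S. G t)
       = (\<Sum>k\<in>I. G k) + (\<Sum>k\<in>J. G (p + k)) + (\<Sum>k\<in>S. G (2*p + k))"
    using fI fJ fS d1 d2 i1 i2 by (simp add: sum.union_disjoint sum.reindex)
  show "card (I \<union> (\<lambda>k. p + k) ` J \<union> (\<lambda>k. 2*p + k) ` S) = card I + card J + card S"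
    using fI fJ fS d1 d2 i1 i2 by (simp add: card_Un_disjoint card_image)
qed

lemma sqrt_sum_sq_diff_le:
  fixes f g :: "nat \<Rightarrow> real"
  shows "sqrt (\<Sum>i<n. (f i - g i)\<^sup>2) \<le> sqrt (\<Sum>i<n. (f i)\<^sup>2) + sqrt (\<Sum>i<n. (g i)\<^sup>2)"
proof -
  have "L2_set (\<lambda>i. f i + (- g i)) {..<n} \<le> L2_set f {..<n} + L2_set (\<lambda>i. - g i) {..<n}"
    by (rule L2_set_triangle_ineq)
  thus ?thesis unfolding L2_set_def by simp
qed

text \<open>Dimension count: \<open>dim span u\<^sub>I + dim span w\<^sub>J + dim span z\<^sub>S > 2p\<close> forces the
  three spans to meet nontrivially.  The witness comes from a linear dependence among the
  \<open>stacked_family\<close> vectors \<open>(u\<^sub>k, u\<^sub>k)\<close>, \<open>(-w\<^sub>k, 0)\<close>, \<open>(0, -z\<^sub>k)\<close> of \<open>\<real>\<^sup>2\<^sup>p\<close>.\<close>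

definition stacked_family ::
    "nat \<Rightarrow> (nat \<Rightarrow> nat \<Rightarrow> real) \<Rightarrow> (nat \<Rightarrow> nat \<Rightarrow> real) \<Rightarrow> (nat \<Rightarrow> nat \<Rightarrow> real) \<Rightarrow> nat \<Rightarrow> nat \<Rightarrow> real" where
  "stacked_family p u w z t i =
     (if t < p then (if i < p then u t i else u t (i - p))
      else if t < 2*p then (if i < p then - w (t - p) i else 0)
      else (if i < p then 0 else - z (t - 2*p) (i - p)))"

lemma sum_stacked_family:
  assumes I: "I \<subseteq> {..<p}" and J: "J \<subseteq> {..<p}" and S: "S \<subseteq> {..<p}" and j: "j < p"
  defines "T \<equiv> I \<union> (\<lambda>k. p + k) ` J \<union> (\<lambda>k. 2*p + k) ` S"
  shows "(\<Sum>t\<in>T. c t * stacked_family p u w z t j) = (\<Sum>k\<in>I. c k * u k j) - (\<Sum>k\<in>J. c (p + k) * w k j)"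
    and "(\<Sum>t\<in>T. c t * stacked_family p u w z t (p + j)) = (\<Sum>k\<in>I. c k * u k j) - (\<Sum>k\<in>S. c (2*p + k) * z k j)"
proof -
  note split = sum_card_union_shifted(1)[OF I J S, of "\<lambda>t. c t * stacked_family p u w z t _", folded T_def]
  have "(\<Sum>k\<in>I. c k * stacked_family p u w z k j) = (\<Sum>k\<in>I. c k * u k j)"
    and "(\<Sum>k\<in>J. c (p + k) * stacked_family p u w z (p + k) j) = - (\<Sum>k\<in>J. c (p + k) * w k j)"
    and "(\<Sum>k\<in>S. c (2*p + k) * stacked_family p u w z (2*p + k) j) = 0"
    unfolding sum_negf[symmetric] stacked_family_def using I J S j by (auto intro!: sum.cong sum.neutral)
  thus "(\<Sum>t\<in>T. c t * stacked_family p u w z t j) = (\<Sum>k\<in>I. c k * u k j) - (\<Sum>k\<in>J. c (p + k) * w k j)"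
    unfolding split by simp
  have "(\<Sum>k\<in>I. c k * stacked_family p u w z k (p + j)) = (\<Sum>k\<in>I. c k * u k j)"
    and "(\<Sum>k\<in>J. c (p + k) * stacked_family p u w z (p + k) (p + j)) = 0"
    and "(\<Sum>k\<in>S. c (2*p + k) * stacked_family p u w z (2*p + k) (p + j)) = - (\<Sum>k\<in>S. c (2*p + k) * z k j)"
    unfolding sum_negf[symmetric] stacked_family_def using I J S j by (auto intro!: sum.cong sum.neutral)
  thus "(\<Sum>t\<in>T. c t * stacked_family p u w z t (p + j)) = (\<Sum>k\<in>I. c k * u k j) - (\<Sum>k\<in>S. c (2*p + k) * z k j)"
    unfolding split by simp
qed

lemma three_spans_meet:
  assumes ou: "orthonormal_rows u p" and ow: "orthonormal_rows w p" and oz: "orthonormal_rows z p"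
    and I: "I \<subseteq> {..<p}" and J: "J \<subseteq> {..<p}" and S: "S \<subseteq> {..<p}"
    and card: "card I + card J + card S > 2 * p"
  obtains \<beta> \<gamma> \<delta> where "\<exists>j<p. (\<Sum>k\<in>I. \<beta> k * u k j) \<noteq> 0"
    and "\<And>j. j < p \<Longrightarrow> (\<Sum>k\<in>J. \<gamma> k * w k j) = (\<Sum>k\<in>I. \<beta> k * u k j)"
    and "\<And>j. j < p \<Longrightarrow> (\<Sum>k\<in>S. \<delta> k * z k j) = (\<Sum>k\<in>I. \<beta> k * u k j)"
proof -
  define T where "T = I \<union> (\<lambda>k. p + k) ` J \<union> (\<lambda>k. 2*p + k) ` S"
  have "finite T" unfolding T_def using I J S finite_subset by blast
  moreover have "card T > 2 * p" unfolding T_def sum_card_union_shifted(2)[OF I J S] by (rule card)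
  ultimately obtain c where c0: "\<exists>t\<in>T. c t \<noteq> 0"
    and c: "\<forall>i<2*p. (\<Sum>t\<in>T. c t * stacked_family p u w z t i) = 0"
    using nontrivial_linear_dependence by blast
  define v where "v j = (\<Sum>k\<in>I. c k * u k j)" for j
  define vw where "vw j = (\<Sum>k\<in>J. c (p + k) * w k j)" for j
  define vz where "vz j = (\<Sum>k\<in>S. c (2*p + k) * z k j)" for j
  have vw: "vw j = v j" and vz: "vz j = v j" if "j < p" for j
    using c sum_stacked_family[OF I J S that, of c u w z, folded T_def] that
    unfolding v_def vw_def vz_def by (auto dest: spec[of _ j] spec[of _ "p + j"])
  have "\<exists>j<p. v j \<noteq> 0"
  proof (rule ccontr)
    assume "\<not> (\<exists>j<p. v j \<noteq> 0)"
    hence "\<And>j. j < p \<Longrightarrow> v j = 0" "\<And>j. j < p \<Longrightarrow> vw j = 0" "\<And>j. j < p \<Longrightarrow> vz j = 0"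
      using vw vz by auto
    hence "c k = 0" if "k \<in> I" for k
      using orthonormal_combination_eq_0[OF ou I _ that, of c] unfolding v_def by auto
    moreover have "c (p + k) = 0" if "k \<in> J" for k
      using orthonormal_combination_eq_0[OF ow J _ that, of "\<lambda>k. c (p + k)"] \<open>\<And>j. j < p \<Longrightarrow> vw j = 0\<close>
      unfolding vw_def by auto
    moreover have "c (2*p + k) = 0" if "k \<in> S" for k
      using orthonormal_combination_eq_0[OF oz S _ that, of "\<lambda>k. c (2*p + k)"] \<open>\<And>j. j < p \<Longrightarrow> vz j = 0\<close>
      unfolding vz_def by auto
    ultimately show False using c0 unfolding T_def by auto
  qed
  thus ?thesis using that[of c "\<lambda>k. c (p + k)" "\<lambda>k. c (2*p + k)"] vw vz
    unfolding v_def vw_def vz_def by blast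
qed

text \<open>For \<open>v\<close> in the common span of \<open>u\<^sub>I\<close>, \<open>w\<^sub>J\<close> and \<open>z\<^sub>S\<close> we would get
  \<open>\<parallel>Cv\<parallel> \<ge> \<surd>x \<parallel>v\<parallel>\<close>, \<open>\<parallel>Bv\<parallel> \<le> \<surd>(x - \<epsilon>) \<parallel>v\<parallel>\<close> and \<open>\<parallel>(B - C)v\<parallel> \<le> \<eta> \<parallel>v\<parallel>\<close>,
  which the gap between \<open>\<surd>(x - \<epsilon>) + \<eta>\<close> and \<open>\<surd>x\<close> makes incompatible with the triangle
  inequality.\<close>

lemma gram_eigenvalue_counts_le:
  fixes b c :: "nat \<Rightarrow> nat \<Rightarrow> real"
  assumes ou: "orthonormal_rows u p" and eu: "eigenbasis (gram n b) u \<alpha> p"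
    and ow: "orthonormal_rows w p" and ew: "eigenbasis (gram n c) w \<gamma> p"
    and oz: "orthonormal_rows z p" and ez: "eigenbasis (gram n (\<lambda>i j. b i j - c i j)) z h p"
    and \<eta>: "\<eta> > 0" and gap: "sqrt (x - \<epsilon>) + \<eta> < sqrt x"
  shows "card {k. k < p \<and> \<alpha> k \<le> x - \<epsilon>} + card {k. k < p \<and> x < \<gamma> k}
           + card {k. k < p \<and> h k < \<eta>\<^sup>2} \<le> 2 * p"
proof (rule ccontr)
  define I where "I = {k. k < p \<and> \<alpha> k \<le> x - \<epsilon>}"
  define J where "J = {k. k < p \<and> x < \<gamma> k}"
  define S where "S = {k. k < p \<and> h k < \<eta>\<^sup>2}"
  have I: "I \<subseteq> {..<p}" and J: "J \<subseteq> {..<p}" and S: "S \<subseteq> {..<p}"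
    unfolding I_def J_def S_def by auto
  assume "\<not> ?thesis"
  hence "card I + card J + card S > 2 * p" unfolding I_def J_def S_def by linarith
  then obtain \<beta> \<beta>\<^sub>w \<beta>\<^sub>z where nz: "\<exists>j<p. (\<Sum>k\<in>I. \<beta> k * u k j) \<noteq> 0"
    and vw: "\<And>j. j < p \<Longrightarrow> (\<Sum>k\<in>J. \<beta>\<^sub>w k * w k j) = (\<Sum>k\<in>I. \<beta> k * u k j)"
    and vz: "\<And>j. j < p \<Longrightarrow> (\<Sum>k\<in>S. \<beta>\<^sub>z k * z k j) = (\<Sum>k\<in>I. \<beta> k * u k j)"
    using three_spans_meet[OF ou ow oz I J S] by blast
  define v where "v j = (\<Sum>k\<in>I. \<beta> k * u k j)" for j
  define N where "N = (\<Sum>j<p. (v j)\<^sup>2)"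
  obtain j0 where "j0 < p" "v j0 \<noteq> 0" using nz unfolding v_def by blast
  hence N: "N > 0" unfolding N_def by (intro sum_pos2[of _ j0]) auto
  define QB where "QB = (\<Sum>i<n. (\<Sum>j<p. b i j * v j)\<^sup>2)"
  define QC where "QC = (\<Sum>i<n. (\<Sum>j<p. c i j * v j)\<^sup>2)"
  define QD where "QD = (\<Sum>i<n. (\<Sum>j<p. (b i j - c i j) * v j)\<^sup>2)"
  have QB: "QB \<le> (x - \<epsilon>) * N" unfolding QB_def N_def v_def
    by (rule gram_quadratic_form_le[OF ou eu I]) (simp add: I_def)
  have QC: "x * N \<le> QC" unfolding QC_def N_def v_def
    using gram_quadratic_form_ge[OF ow ew J, of x \<beta>\<^sub>w] vw by (simp add: J_def)
  have QD: "QD \<le> \<eta>\<^sup>2 * N" unfolding QD_def N_def v_def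
    using gram_quadratic_form_le[OF oz ez S, of "\<eta>\<^sup>2" \<beta>\<^sub>z] vz by (simp add: S_def)
  have "(\<Sum>j<p. c i j * v j) = (\<Sum>j<p. b i j * v j) - (\<Sum>j<p. (b i j - c i j) * v j)" for i
    by (simp add: algebra_simps sum_subtractf)
  hence "sqrt QC \<le> sqrt QB + sqrt QD" unfolding QB_def QC_def QD_def using sqrt_sum_sq_diff_le by presburger
  moreover have "sqrt x * sqrt N \<le> sqrt QC" using QC by (metis real_sqrt_le_mono real_sqrt_mult)
  moreover have "sqrt QB \<le> sqrt (x - \<epsilon>) * sqrt N" using QB by (metis real_sqrt_le_mono real_sqrt_mult)
  moreover have "sqrt QD \<le> \<eta> * sqrt N" using QD \<eta>
    by (metis real_sqrt_le_mono real_sqrt_mult real_sqrt_abs abs_of_pos power2_eq_square real_sqrt_mult_self)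
  moreover have "(sqrt (x - \<epsilon>) + \<eta>) * sqrt N < sqrt x * sqrt N"
    using gap N by (intro mult_strict_right_mono) auto
  ultimately show False by (simp add: algebra_simps)
qed

lemma gram_eigenvalue_nonneg:
  assumes ou: "orthonormal_rows u p" and eu: "eigenbasis (gram n b) u \<alpha> p" and k: "k < p"
  shows "\<alpha> k \<ge> 0"
proof -
  have "(\<Sum>i<n. (\<Sum>j<p. b i j * (\<Sum>k'\<in>{k}. 1 * u k' j))\<^sup>2) = (\<Sum>k'\<in>{k}. \<alpha> k' * 1\<^sup>2)"
    by (rule gram_quadratic_form(1)[OF ou eu]) (use k in auto)
  hence "\<alpha> k = (\<Sum>i<n. (\<Sum>j<p. b i j * u k j)\<^sup>2)" by simp
  also have "\<dots> \<ge> 0" by (intro sum_nonneg) auto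
  finally show ?thesis .
qed

lemma gram_eigenvalue_sum:
  assumes ou: "orthonormal_rows u p" and cu: "orthonormal_cols u p" and eu: "eigenbasis (gram n b) u \<alpha> p"
  shows "(\<Sum>k<p. \<alpha> k) = (\<Sum>i<n. \<Sum>j<p. (b i j)\<^sup>2)"
proof -
  have ak: "\<alpha> k = (\<Sum>j<p. u k j * (\<Sum>l<p. gram n b j l * u k l))" if k: "k < p" for k
  proof -
    have "(\<Sum>j<p. u k j * (\<Sum>l<p. gram n b j l * u k l)) = (\<Sum>j<p. u k j * (\<alpha> k * u k j))"
      using eu k unfolding eigenbasis_def by (intro sum.cong refl) auto
    also have "\<dots> = \<alpha> k * (\<Sum>j<p. u k j * u k j)" by (simp add: sum_distrib_left ac_simps)
    also have "\<dots> = \<alpha> k" using ou k unfolding orthonormal_rows_def by auto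
    finally show ?thesis by simp
  qed
  have "(\<Sum>k<p. \<alpha> k) = (\<Sum>k<p. \<Sum>j<p. \<Sum>l<p. gram n b j l * (u k j * u k l))"
    using ak by (simp add: sum_distrib_left ac_simps)
  also have "\<dots> = (\<Sum>j<p. \<Sum>k<p. \<Sum>l<p. gram n b j l * (u k j * u k l))" by (rule sum.swap)
  also have "\<dots> = (\<Sum>j<p. \<Sum>l<p. \<Sum>k<p. gram n b j l * (u k j * u k l))" by (intro sum.cong refl sum.swap)
  also have "\<dots> = (\<Sum>j<p. \<Sum>l<p. gram n b j l * (if j = l then 1 else 0))"
    using cu unfolding orthonormal_cols_def orthonormal_rows_def by (intro sum.cong refl) (auto simp: sum_distrib_left[symmetric])
  also have "\<dots> = (\<Sum>j<p. gram n b j j)" by (intro sum.cong refl) (simp add: mult_if_delta_right)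
  also have "\<dots> = (\<Sum>j<p. \<Sum>i<n. (b i j)\<^sup>2)" by (simp add: gram_def power2_eq_square)
  also have "\<dots> = (\<Sum>i<n. \<Sum>j<p. (b i j)\<^sup>2)" by (rule sum.swap)
  finally show ?thesis .
qed

lemma card_ge_le_sum_div:
  fixes \<alpha> :: "nat \<Rightarrow> real"
  assumes nn: "\<And>k. k < p \<Longrightarrow> \<alpha> k \<ge> 0" and t: "t > 0"
  shows "real (card {k. k < p \<and> t \<le> \<alpha> k}) \<le> (\<Sum>k<p. \<alpha> k) / t"
proof -
  have "real (card {k. k < p \<and> t \<le> \<alpha> k}) * t = (\<Sum>k\<in>{k. k < p \<and> t \<le> \<alpha> k}. t)" by simp
  also have "\<dots> \<le> (\<Sum>k\<in>{k. k < p \<and> t \<le> \<alpha> k}. \<alpha> k)" by (intro sum_mono) auto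
  also have "\<dots> \<le> (\<Sum>k<p. \<alpha> k)" by (intro sum_mono2) (auto simp: nn)
  finally show ?thesis using t by (simp add: pos_le_divide_eq)
qed

lemma gram_card_eigenvalues_ge_le:
  assumes ou: "orthonormal_rows u p" and cu: "orthonormal_cols u p" and eu: "eigenbasis (gram n b) u \<alpha> p"
    and t: "t > 0"
  shows "real (card {k. k < p \<and> t \<le> \<alpha> k}) \<le> (\<Sum>i<n. \<Sum>j<p. (b i j)\<^sup>2) / t"
  using card_ge_le_sum_div[of p \<alpha> t] gram_eigenvalue_nonneg[OF ou eu] t gram_eigenvalue_sum[OF ou cu eu]
  by simp

lemma card_filter_compl: "card {k. k < p \<and> P k} + card {k. k < p \<and> \<not> P k} = p"
proof -
  have "card ({k. k < p \<and> P k} \<union> {k. k < p \<and> \<not> P k}) = card {k. k < p \<and> P k} + card {k. k < p \<and> \<not> P k}"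
    by (rule card_Un_disjoint) auto
  moreover have "{k. k < p \<and> P k} \<union> {k. k < p \<and> \<not> P k} = {..<p}" by auto
  ultimately show ?thesis by simp
qed

lemma sqrt_diff_gap:
  fixes \<epsilon> x X :: real
  assumes \<epsilon>: "0 < \<epsilon>" and x: "\<epsilon> \<le> x" "x \<le> X"
  shows "sqrt (x - \<epsilon>) + \<epsilon> / (4 * sqrt X) < sqrt x"
proof -
  have X: "0 < sqrt X" using \<epsilon> x by simp
  have "(sqrt x - sqrt (x - \<epsilon>)) * (sqrt x + sqrt (x - \<epsilon>)) = \<epsilon>"
    using \<epsilon> x by (simp add: algebra_simps)
  moreover have "sqrt x \<le> sqrt X" "sqrt (x - \<epsilon>) \<le> sqrt x" "0 < sqrt x" "0 \<le> sqrt (x - \<epsilon>)"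
    using \<epsilon> x by auto
  hence "0 < sqrt x + sqrt (x - \<epsilon>)" "sqrt x + sqrt (x - \<epsilon>) \<le> 2 * sqrt X" by linarith+
  ultimately have "sqrt x - sqrt (x - \<epsilon>) = \<epsilon> / (sqrt x + sqrt (x - \<epsilon>))"
    and "\<epsilon> / (2 * sqrt X) \<le> \<epsilon> / (sqrt x + sqrt (x - \<epsilon>))"
    using \<epsilon> X by (auto simp: eq_divide_eq intro!: divide_left_mono)
  hence "\<epsilon> / (2 * sqrt X) \<le> sqrt x - sqrt (x - \<epsilon>)" by simp
  moreover have "\<epsilon> / (4 * sqrt X) < \<epsilon> / (2 * sqrt X)" using \<epsilon> X by (simp add: field_simps)
  ultimately show ?thesis by linarith
qed


lemma gram_eigenvalue_count_shift:
  fixes b c :: "nat \<Rightarrow> nat \<Rightarrow> real"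
  assumes ou: "orthonormal_rows u p" and eu: "eigenbasis (gram n b) u \<alpha> p"
    and ow: "orthonormal_rows w p" and cw: "orthonormal_cols w p" and ew: "eigenbasis (gram n c) w \<gamma> p"
    and K: "K > 0" and \<epsilon>: "\<epsilon> > 0"
    and nc: "(\<Sum>i<n. \<Sum>j<p. (c i j)\<^sup>2) \<le> K * p"
    and nd: "(\<Sum>i<n. \<Sum>j<p. (b i j - c i j)\<^sup>2) \<le> \<epsilon>^4 * p / (16 * K)"
  shows "real (card {k. k < p \<and> \<alpha> k \<le> x - \<epsilon>}) \<le> real (card {k. k < p \<and> \<gamma> k \<le> x}) + \<epsilon> * p"
proof -
  have split_\<gamma>: "real (card {k. k < p \<and> \<gamma> k \<le> x}) + real (card {k. k < p \<and> x < \<gamma> k}) = p"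
    using card_filter_compl[of p "\<lambda>k. \<gamma> k \<le> x"] by (simp add: not_le flip: of_nat_add)
  have "card {k. k < p \<and> \<alpha> k \<le> x - \<epsilon>} \<le> card {..<p}" by (intro card_mono) auto
  hence card_\<alpha>: "real (card {k. k < p \<and> \<alpha> k \<le> x - \<epsilon>}) \<le> p" by simp
  define X where "X = K / \<epsilon>"
  consider (low) "x < \<epsilon>" | (high) "X < x" | (mid) "\<epsilon> \<le> x" "x \<le> X" by linarith
  thus ?thesis
  proof cases
    case low
    hence "{k. k < p \<and> \<alpha> k \<le> x - \<epsilon>} = {}"
      using gram_eigenvalue_nonneg[OF ou eu] by force
    moreover have "0 \<le> real (card {k. k < p \<and> \<gamma> k \<le> x}) + \<epsilon> * p" using \<epsilon> by simp
    ultimately show ?thesis by (simp only: card.empty of_nat_0)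
  next
    case high
    have x: "0 < x" using high divide_pos_pos[OF K \<epsilon>] unfolding X_def by linarith
    have "card {k. k < p \<and> x < \<gamma> k} \<le> card {k. k < p \<and> x \<le> \<gamma> k}" by (intro card_mono) auto
    also have "real \<dots> \<le> (\<Sum>i<n. \<Sum>j<p. (c i j)\<^sup>2) / x"
      by (rule gram_card_eigenvalues_ge_le[OF ow cw ew x])
    also have "\<dots> \<le> K * p / X"
      using high x K \<epsilon> nc by (intro frac_le) (auto simp: X_def intro: sum_nonneg)
    also have "\<dots> = \<epsilon> * p" using K \<epsilon> by (simp add: X_def)
    finally show ?thesis using split_\<gamma> card_\<alpha> by linarith
  next
    case mid
    obtain z h where oz: "orthonormal_rows z p" and cz: "orthonormal_cols z p"
      and ez: "eigenbasis (gram n (\<lambda>i j. b i j - c i j)) z h p"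
      using real_symmetric_spectral[of p "gram n (\<lambda>i j. b i j - c i j)"] gram_commute by blast
    define \<eta> where "\<eta> = \<epsilon> / (4 * sqrt X)"
    have \<eta>: "\<eta> > 0" and \<eta>2: "\<eta>\<^sup>2 = \<epsilon>^3 / (16 * K)" unfolding \<eta>_def X_def using \<epsilon> K
      by (simp_all add: power2_eq_square power3_eq_cube field_simps real_sqrt_mult_self)
    have "card {k. k < p \<and> \<alpha> k \<le> x - \<epsilon>} + card {k. k < p \<and> x < \<gamma> k} + card {k. k < p \<and> h k < \<eta>\<^sup>2} \<le> 2 * p"
      using gram_eigenvalue_counts_le[OF ou eu ow ew oz ez \<eta>] sqrt_diff_gap[OF \<epsilon> mid] unfolding \<eta>_def
      by blast
    moreover have "real (card {k. k < p \<and> h k < \<eta>\<^sup>2}) + real (card {k. k < p \<and> \<eta>\<^sup>2 \<le> h k}) = p"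
      using card_filter_compl[of p "\<lambda>k. h k < \<eta>\<^sup>2"] by (simp add: not_less flip: of_nat_add)
    moreover have "real (card {k. k < p \<and> \<eta>\<^sup>2 \<le> h k}) \<le> (\<Sum>i<n. \<Sum>j<p. (b i j - c i j)\<^sup>2) / \<eta>\<^sup>2"
      using \<eta> by (intro gram_card_eigenvalues_ge_le[OF oz cz ez]) auto
    moreover have "(\<Sum>i<n. \<Sum>j<p. (b i j - c i j)\<^sup>2) / \<eta>\<^sup>2 \<le> \<epsilon> * p"
      using nd \<epsilon> K unfolding \<eta>2 by (simp add: field_simps power_numeral_reduce)
    ultimately show ?thesis using split_\<gamma> by (simp flip: of_nat_add of_nat_mult)
  qed
qed


section \<open>Levy distance of spectral distributions of Gram matrices\<close>

lemma levy_dist_le: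
  assumes \<epsilon>: "\<epsilon> > 0" and FG: "\<And>x. F (x - \<epsilon>) - \<epsilon> \<le> G x" and GF: "\<And>x. G (x - \<epsilon>) - \<epsilon> \<le> F x"
  shows "0 \<le> levy_dist F G" and "levy_dist F G \<le> \<epsilon>"
proof -
  define S where "S = {\<epsilon>. \<epsilon> > 0 \<and> (\<forall>x. F (x - \<epsilon>) - \<epsilon> \<le> G x \<and> G x \<le> F (x + \<epsilon>) + \<epsilon>)}"
  have "G x \<le> F (x + \<epsilon>) + \<epsilon>" for x using GF[of "x + \<epsilon>"] by simp
  hence \<epsilon>S: "\<epsilon> \<in> S" unfolding S_def using \<epsilon> FG by auto
  have "bdd_below S" unfolding S_def by (rule bdd_belowI[of _ 0]) auto
  thus "levy_dist F G \<le> \<epsilon>" unfolding levy_dist_def S_def[symmetric] by (rule cInf_lower[OF \<epsilon>S])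
  show "0 \<le> levy_dist F G" unfolding levy_dist_def S_def[symmetric]
    by (rule cInf_greatest) (use \<epsilon>S in \<open>auto simp: S_def\<close>)
qed

definition gram_mat :: "nat \<Rightarrow> nat \<Rightarrow> (nat \<Rightarrow> nat \<Rightarrow> real) \<Rightarrow> real mat" where
  "gram_mat n p b = mat p p (\<lambda>(j,l). gram n b j l)"

lemma esd_gram_mat:
  assumes ou: "orthonormal_rows u p" and cu: "orthonormal_cols u p" and eu: "eigenbasis (gram n b) u \<alpha> p"
  shows "esd (gram_mat n p b) x = real (card {k. k < p \<and> \<alpha> k \<le> x}) / real p"
proof -
  have M: "gram_mat n p b \<in> carrier_mat p p" unfolding gram_mat_def by auto
  have "eigenbasis (\<lambda>i j. gram_mat n p b $$ (i,j)) u \<alpha> p"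
    using eu unfolding eigenbasis_def gram_mat_def by auto
  hence "char_poly (gram_mat n p b) = (\<Prod>k<p. [:- \<alpha> k, 1:])" by (rule char_poly_eigenbasis[OF M ou cu])
  thus ?thesis by (rule esd_split_char_poly) (simp add: gram_mat_def)
qed

lemma esd_gram_mat_shift_le:
  fixes b c :: "nat \<Rightarrow> nat \<Rightarrow> real"
  assumes p: "p > 0" and K: "K > 0" and \<epsilon>: "\<epsilon> > 0"
    and nc: "(\<Sum>i<n. \<Sum>j<p. (c i j)\<^sup>2) \<le> K * p"
    and nd: "(\<Sum>i<n. \<Sum>j<p. (b i j - c i j)\<^sup>2) \<le> \<epsilon>^4 * p / (16 * K)"
  shows "esd (gram_mat n p b) (x - \<epsilon>) - \<epsilon> \<le> esd (gram_mat n p c) x"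
proof -
  obtain u \<alpha> where ou: "orthonormal_rows u p" and cu: "orthonormal_cols u p"
    and eu: "eigenbasis (gram n b) u \<alpha> p"
    using real_symmetric_spectral[of p "gram n b"] gram_commute by blast
  obtain w \<gamma> where ow: "orthonormal_rows w p" and cw: "orthonormal_cols w p"
    and ew: "eigenbasis (gram n c) w \<gamma> p"
    using real_symmetric_spectral[of p "gram n c"] gram_commute by blast
  have "real (card {k. k < p \<and> \<alpha> k \<le> x - \<epsilon>}) \<le> real (card {k. k < p \<and> \<gamma> k \<le> x}) + \<epsilon> * p"
    by (rule gram_eigenvalue_count_shift[OF ou eu ow cw ew K \<epsilon> nc nd])
  hence "real (card {k. k < p \<and> \<alpha> k \<le> x - \<epsilon>}) / p \<le> real (card {k. k < p \<and> \<gamma> k \<le> x}) / p + \<epsilon>"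
    using p by (simp add: field_simps)
  thus ?thesis unfolding esd_gram_mat[OF ou cu eu] esd_gram_mat[OF ow cw ew] by simp
qed

lemma levy_dist_esd_gram_mat_le:
  fixes b c :: "nat \<Rightarrow> nat \<Rightarrow> real"
  assumes p: "p > 0" and K: "K > 0" and \<epsilon>: "\<epsilon> > 0"
    and nb: "(\<Sum>i<n. \<Sum>j<p. (b i j)\<^sup>2) \<le> K * p"
    and nc: "(\<Sum>i<n. \<Sum>j<p. (c i j)\<^sup>2) \<le> K * p"
    and nd: "(\<Sum>i<n. \<Sum>j<p. (b i j - c i j)\<^sup>2) \<le> \<epsilon>^4 * p / (16 * K)"
  shows "0 \<le> levy_dist (esd (gram_mat n p b)) (esd (gram_mat n p c))"
    and "levy_dist (esd (gram_mat n p b)) (esd (gram_mat n p c)) \<le> \<epsilon>"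
proof -
  have nd': "(\<Sum>i<n. \<Sum>j<p. (c i j - b i j)\<^sup>2) \<le> \<epsilon>^4 * p / (16 * K)"
    using nd by (simp add: power2_commute)
  note shifts = esd_gram_mat_shift_le[OF p K \<epsilon> nc nd] esd_gram_mat_shift_le[OF p K \<epsilon> nb nd']
  show "0 \<le> levy_dist (esd (gram_mat n p b)) (esd (gram_mat n p c))"
    and "levy_dist (esd (gram_mat n p b)) (esd (gram_mat n p c)) \<le> \<epsilon>"
    using levy_dist_le[of \<epsilon> "esd (gram_mat n p b)" "esd (gram_mat n p c)", OF \<epsilon> shifts] by auto
qed


section \<open>Uniform approximation of distribution functions from a grid\<close>

lemma continuous_mono_first_hit:
  fixes G :: "real \<Rightarrow> real"
  assumes cont: "continuous_on UNIV G" and mono: "\<And>s t. s \<le> t \<Longrightarrow> G s \<le> G t"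
    and t0: "G t0 < c" and t1: "c \<le> G t1"
  shows "\<exists>t. G t = c \<and> (\<forall>s<t. G s < c)"
proof -
  define S where "S = {t. c \<le> G t}"
  have "t0 \<le> t" if "t \<in> S" for t
    using that t0 mono[of t t0] unfolding S_def by (cases "t0 \<le> t") auto
  hence bdd: "bdd_below S" unfolding bdd_below_def by blast
  have "closed S" unfolding S_def by (rule closed_Collect_le) (auto intro: continuous_intros cont)
  moreover have "S \<noteq> {}" using t1 unfolding S_def by auto
  ultimately have "Inf S \<in> S" using bdd closed_contains_Inf by blast
  hence ge: "c \<le> G (Inf S)" unfolding S_def by simp
  have below: "G s < c" if "s < Inf S" for s
    using that cInf_lower[OF _ bdd, of s] unfolding S_def by force
  have "closed {t. G t \<le> c}" by (rule closed_Collect_le) (auto intro: continuous_intros cont)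
  moreover have "{..<Inf S} \<subseteq> {t. G t \<le> c}" using below by (auto intro: less_imp_le)
  ultimately have "closure {..<Inf S} \<subseteq> {t. G t \<le> c}" by (intro closure_minimal)
  hence "G (Inf S) \<le> c" by auto
  thus ?thesis using ge below by (intro exI[of _ "Inf S"]) auto
qed

context
  fixes G H :: "real \<Rightarrow> real" and m :: nat and q :: "nat \<Rightarrow> real"
  assumes m: "m \<ge> 1"
    and mono_G: "\<And>s t. s \<le> t \<Longrightarrow> G s \<le> G t" and mono_H: "\<And>s t. s \<le> t \<Longrightarrow> H s \<le> H t"
    and G_bounds: "\<And>t. 0 \<le> G t \<and> G t \<le> 1" and H_bounds: "\<And>t. 0 \<le> H t \<and> H t \<le> 1"
    and quantile: "\<And>l. 1 \<le> l \<Longrightarrow> l < m \<Longrightarrow> G (q l) = l / m \<and> (\<forall>s < q l. G s < l / m)"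
    and close: "\<And>l. 1 \<le> l \<Longrightarrow> l < m \<Longrightarrow> \<bar>H (q l) - G (q l)\<bar> \<le> 1 / m"
begin

text \<open>The level \<open>\<lfloor>m G t\<rfloor>\<close> of \<open>t\<close> locates \<open>t\<close> between consecutive grid points \<open>q l\<close>.\<close>

lemma grid_level:
  obtains l :: nat where "real l \<le> m * G t" and "m * G t < real l + 1"
proof -
  have "0 \<le> real m * G t" using G_bounds[of t] by simp
  hence "real (nat \<lfloor>m * G t\<rfloor>) = of_int \<lfloor>m * G t\<rfloor>" by simp
  thus ?thesis
    using that[of "nat \<lfloor>m * G t\<rfloor>"] of_int_floor_le[of "m * G t"] real_of_int_floor_add_one_gt[of "m * G t"]
    by linarith
qed

lemma grid_close_lower: "G t - 2 / m \<le> H t"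
proof -
  have mpos: "real m > 0" using m by simp
  obtain l :: nat where l1: "real l \<le> m * G t" and l2: "m * G t < real l + 1" by (rule grid_level)
  define k where "k = min l (m - 1)"
  have km: "k < m" unfolding k_def using m by simp
  have kG: "k / m \<le> G t" using l1 mpos unfolding k_def by (simp add: field_simps)
  have Gk: "G t \<le> k / m + 1 / m"
  proof (cases "l \<le> m - 1")
    case True
    thus ?thesis using l2 mpos unfolding k_def by (simp add: field_simps)
  next
    case False
    hence "real k = real m - 1" using m unfolding k_def by simp
    thus ?thesis using G_bounds[of t] mpos by (simp add: field_simps)
  qed
  show ?thesis
  proof (cases "k \<ge> 1")
    case True
    have "q k \<le> t" using quantile[OF True km] kG by (meson not_le)
    hence "G (q k) - 1 / m \<le> H t" using mono_H[of "q k" t] close[OF True km] by simp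
    thus ?thesis using quantile[OF True km] Gk by (simp add: field_simps)
  next
    case False
    hence "k = 0" by simp
    hence "G t \<le> 1 / m" using Gk by simp
    moreover have "0 \<le> 1 / real m" "2 / real m = 2 * (1 / m)" by simp_all
    ultimately show ?thesis using H_bounds[of t] by linarith
  qed
qed

lemma grid_close_upper: "H t \<le> G t + 2 / m"
proof -
  have mpos: "real m > 0" using m by simp
  obtain l :: nat where l1: "real l \<le> m * G t" and l2: "m * G t < real l + 1" by (rule grid_level)
  show ?thesis
  proof (cases "l + 1 < m")
    case True
    have q: "G (q (l+1)) = (l + 1) / m" using quantile[OF _ True] by simp
    have "G t < (l + 1) / m" using l2 mpos by (simp add: field_simps)
    hence "t \<le> q (l+1)" using q mono_G[of "q (l+1)" t] by force
    hence "H t \<le> G (q (l+1)) + 1 / m" using mono_H[of t "q (l+1)"] close[OF _ True] by simp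
    thus ?thesis using q l1 mpos by (simp add: field_simps)
  next
    case False
    hence "1 \<le> G t + 1 / m" using l1 mpos by (simp add: field_simps)
    moreover have "0 \<le> 1 / real m" "2 / real m = 2 * (1 / m)" by simp_all
    ultimately show ?thesis using H_bounds[of t] by linarith
  qed
qed

lemma grid_close_uniform: "\<bar>H t - G t\<bar> \<le> 2 / m"
  unfolding abs_le_iff using grid_close_lower[of t] grid_close_upper[of t] by (intro conjI) linarith+

end


section \<open>Almost sure uniform convergence of the coordinatewise empirical distribution functions\<close>

lemma summable_of_nat_mult_exp:
  fixes c :: real assumes c: "c > 0"
  shows "summable (\<lambda>n. real n * exp (- c * real n))"
proof -
  have b: "real n * exp (- c * real n) \<le> (2 / c) * exp (- c / 2) ^ n" for n
  proof -
    have "c * real n / 2 \<le> exp (c * real n / 2)"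
      using exp_ge_add_one_self[of "c * real n / 2"] by linarith
    hence "real n \<le> (2 / c) * exp (c * real n / 2)" using c by (simp add: field_simps)
    hence "real n * exp (- c * real n) \<le> (2 / c) * exp (c * real n / 2) * exp (- c * real n)"
      by (intro mult_right_mono) auto
    also have "\<dots> = (2 / c) * exp (- c / 2) ^ n"
      by (simp add: exp_add[symmetric] exp_of_nat_mult[symmetric] field_simps)
    finally show ?thesis .
  qed
  have "summable (\<lambda>n. (2 / c) * exp (- c / 2) ^ n)"
    using c by (intro summable_mult summable_geometric) simp
  thus ?thesis
    by (rule summable_comparison_test'[where N = 0]) (use b in simp)
qed

lemma sum_indicator_eq_card:
  fixes n :: nat
  shows "(\<Sum>k<n. indicator {\<omega>. P k \<omega>} \<omega> :: real) = real (card {k. k < n \<and> P k \<omega>})"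
proof (induction n)
  case 0 thus ?case by simp
next
  case (Suc n)
  have "{k. k < Suc n \<and> P k \<omega>} = {k. k < n \<and> P k \<omega>} \<union> (if P n \<omega> then {n} else {})"
    by (auto simp: less_Suc_eq)
  hence "card {k. k < Suc n \<and> P k \<omega>} = card {k. k < n \<and> P k \<omega>} + (if P n \<omega> then 1 else 0)"
    by (auto simp: card_insert_if)
  thus ?case using Suc by (simp add: indicator_def)
qed

locale sample_array = prob_space M for M :: "'a measure" +
  fixes p :: "nat \<Rightarrow> nat" and X :: "nat \<Rightarrow> nat \<Rightarrow> nat \<Rightarrow> 'a \<Rightarrow> real"
    and F :: "nat \<Rightarrow> nat \<Rightarrow> real \<Rightarrow> real"
  assumes indep: "\<And>n. indep_vars (\<lambda>_. PiM {..<p n} (\<lambda>_. borel))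
                   (\<lambda>i \<omega>. \<lambda>j\<in>{..<p n}. X n i j \<omega>) {..<n}"
    and marg: "\<And>n i j t. i < n \<Longrightarrow> j < p n \<Longrightarrow>
                 measure M {\<omega> \<in> space M. X n i j \<omega> \<le> t} = F n j t"
    and cont: "\<And>n j. j < p n \<Longrightarrow> continuous_on UNIV (F n j)"
begin

lemma X_measurable:
  assumes "i < n" "j < p n"
  shows "X n i j \<in> borel_measurable M"
proof -
  have V: "(\<lambda>\<omega>. \<lambda>j\<in>{..<p n}. X n i j \<omega>) \<in> M \<rightarrow>\<^sub>M PiM {..<p n} (\<lambda>_. borel)"
    using indep[of n] assms unfolding indep_vars_def2 by auto
  have "(\<lambda>\<omega>. (\<lambda>j\<in>{..<p n}. X n i j \<omega>) j) \<in> borel_measurable M"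
    by (rule measurable_compose[OF V measurable_component_singleton]) (use assms in auto)
  thus ?thesis using assms by simp
qed

lemma F_eq_cdf:
  assumes "0 < n" "j < p n"
  shows "real_distribution (distr M borel (X n 0 j))" and "F n j = cdf (distr M borel (X n 0 j))"
proof -
  have [measurable]: "X n 0 j \<in> borel_measurable M" using X_measurable assms by auto
  show "real_distribution (distr M borel (X n 0 j))" by simp
  have "F n j t = cdf (distr M borel (X n 0 j)) t" for t
    using marg[of 0 n j t] assms unfolding cdf_def2 by (simp add: measure_distr vimage_def Int_def conj_commute)
  thus "F n j = cdf (distr M borel (X n 0 j))" ..
qed

lemma F_mono: "0 < n \<Longrightarrow> j < p n \<Longrightarrow> s \<le> t \<Longrightarrow> F n j s \<le> F n j t"
  using F_eq_cdf finite_borel_measure.cdf_nondecreasing real_distribution.finite_borel_measure_M by metis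

lemma F_bounds: "0 < n \<Longrightarrow> j < p n \<Longrightarrow> 0 \<le> F n j t \<and> F n j t \<le> 1"
  using F_eq_cdf finite_borel_measure.cdf_nonneg real_distribution.finite_borel_measure_M
    real_distribution.cdf_bounded_prob by metis

lemma F_first_hit:
  assumes n: "0 < n" and j: "j < p n" and c: "0 < c" "c < 1"
  shows "\<exists>t. F n j t = c \<and> (\<forall>s<t. F n j s < c)"
proof -
  interpret D: real_distribution "distr M borel (X n 0 j)" by (rule F_eq_cdf(1)[OF n j])
  have "eventually (\<lambda>t. F n j t < c) at_bot"
    using D.cdf_lim_at_bot c unfolding F_eq_cdf(2)[OF n j] by (intro order_tendstoD(2)) auto
  then obtain t0 where t0: "F n j t0 < c" by (auto simp: eventually_at_bot_linorder)
  have "eventually (\<lambda>t. c < F n j t) at_top"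
    using D.cdf_lim_at_top_prob c unfolding F_eq_cdf(2)[OF n j] by (intro order_tendstoD(1)) auto
  then obtain t1 where t1: "c < F n j t1" by (auto simp: eventually_at_top_linorder)
  show ?thesis
    using continuous_mono_first_hit[OF cont[OF j] F_mono[OF n j] t0, of t1] t1 by auto
qed

lemma hoeffding_count:
  assumes n: "0 < n" and j: "j < p n" and e: "e \<ge> 0"
  shows "prob {\<omega> \<in> space M. e \<le> \<bar>(\<Sum>k<n. indicator {\<omega>. X n k j \<omega> \<le> t} \<omega>) - real n * F n j t\<bar>}
         \<le> 2 * exp (- 2 * e\<^sup>2 / real n)"
proof -
  define Y where "Y k = (indicator {\<omega>. X n k j \<omega> \<le> t} :: 'a \<Rightarrow> real)" for k
  have iv: "indep_vars (\<lambda>_. borel) Y {..<n}"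
  proof -
    have "indep_vars (\<lambda>_. borel) (\<lambda>k \<omega>. (\<lambda>v. indicator {..t} (v j) :: real) ((\<lambda>j\<in>{..<p n}. X n k j \<omega>))) {..<n}"
    proof (rule indep_vars_compose2[OF indep])
      fix i assume "i \<in> {..<n}"
      show "(\<lambda>v. indicator {..t} (v j) :: real) \<in> PiM {..<p n} (\<lambda>_. borel) \<rightarrow>\<^sub>M borel"
        by (rule measurable_compose[OF measurable_component_singleton]) (use j in auto)
    qed
    moreover have "(\<lambda>k \<omega>. (\<lambda>v. indicator {..t} (v j) :: real) ((\<lambda>j\<in>{..<p n}. X n k j \<omega>))) = Y"
      using j by (auto simp: Y_def indicator_def fun_eq_iff)
    ultimately show ?thesis by simp
  qed
  have EY: "expectation (Y k) = F n j t" if "k < n" for k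
  proof -
    have "expectation (Y k) = measure M ({\<omega>. X n k j \<omega> \<le> t} \<inter> space M)"
      unfolding Y_def by (rule Bochner_Integration.integral_indicator)
    also have "{\<omega>. X n k j \<omega> \<le> t} \<inter> space M = {\<omega> \<in> space M. X n k j \<omega> \<le> t}" by auto
    finally show ?thesis using marg[OF that j] by simp
  qed
  interpret H: Hoeffding_ineq M "{..<n}" Y "\<lambda>_. 0" "\<lambda>_. 1" "\<Sum>k<n. expectation (Y k)"
    by unfold_locales (auto simp: iv Y_def indicator_def)
  have mu: "(\<Sum>k<n. expectation (Y k)) = real n * F n j t" using EY by simp
  have "prob {\<omega> \<in> space M. e \<le> \<bar>(\<Sum>k<n. Y k \<omega>) - (\<Sum>k<n. expectation (Y k))\<bar>}
        \<le> 2 * exp (- 2 * e\<^sup>2 / (\<Sum>k<n. (1 - 0)\<^sup>2))"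
    by (rule H.Hoeffding_ineq_abs_ge[OF e]) (use n in simp)
  thus ?thesis unfolding mu by (simp add: Y_def)
qed

definition ecdf :: "nat \<Rightarrow> nat \<Rightarrow> 'a \<Rightarrow> real \<Rightarrow> real" where
  "ecdf n j \<omega> t = real (card {k. k < n \<and> X n k j \<omega> \<le> t}) / real n"

definition grid_point :: "nat \<Rightarrow> nat \<Rightarrow> nat \<Rightarrow> nat \<Rightarrow> real" where
  "grid_point m n j l = (SOME t. F n j t = real l / real m \<and> (\<forall>s<t. F n j s < real l / real m))"

definition deviation_event :: "nat \<Rightarrow> nat \<Rightarrow> nat \<Rightarrow> nat \<Rightarrow> 'a set" where
  "deviation_event m n j l = {\<omega> \<in> space M. real n / real m \<le>
     \<bar>(\<Sum>k<n. indicator {\<omega>. X n k j \<omega> \<le> grid_point m n j l} \<omega>) - real n * F n j (grid_point m n j l)\<bar>}"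

definition bad_event :: "nat \<Rightarrow> nat \<Rightarrow> 'a set" where
  "bad_event m n = (if 0 < n then \<Union>j\<in>{..<p n}. \<Union>l\<in>{1..<m}. deviation_event m n j l else {})"

lemma grid_point_first_hit:
  assumes "0 < n" "j < p n" "1 \<le> l" "l < m"
  shows "F n j (grid_point m n j l) = real l / real m \<and> (\<forall>s<grid_point m n j l. F n j s < real l / real m)"
  unfolding grid_point_def using assms by (intro someI_ex[OF F_first_hit]) auto

lemma deviation_event_sets:
  assumes "0 < n" "j < p n"
  shows "deviation_event m n j l \<in> sets M"
proof -
  define t where "t = grid_point m n j l"
  have ind: "(\<lambda>\<omega>. indicator {\<omega>. X n k j \<omega> \<le> t} \<omega> :: real) \<in> borel_measurable M" if "k < n" for k
  proof -
    have "(\<lambda>\<omega>. indicator {..t} (X n k j \<omega>) :: real) \<in> borel_measurable M"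
      by (rule measurable_compose[OF X_measurable[OF that assms(2)]]) auto
    moreover have "(\<lambda>\<omega>. indicator {..t} (X n k j \<omega>) :: real) = (\<lambda>\<omega>. indicator {\<omega>. X n k j \<omega> \<le> t} \<omega>)"
      by (auto simp: indicator_def fun_eq_iff)
    ultimately show ?thesis by simp
  qed
  have g[measurable]: "(\<lambda>\<omega>. \<bar>(\<Sum>k<n. indicator {\<omega>. X n k j \<omega> \<le> t} \<omega>) - real n * F n j t\<bar> :: real) \<in> borel_measurable M"
    using ind by (intro borel_measurable_abs borel_measurable_diff borel_measurable_sum) auto
  have "{\<omega> \<in> space M. real n / real m \<le> \<bar>(\<Sum>k<n. indicator {\<omega>. X n k j \<omega> \<le> t} \<omega>) - real n * F n j t\<bar>} \<in> sets M"
    by measurable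
  thus ?thesis unfolding deviation_event_def t_def .
qed

lemma bad_event_sets: "bad_event m n \<in> sets M"
  unfolding bad_event_def using deviation_event_sets by auto

lemma prob_deviation_event_le:
  assumes "0 < n" "j < p n" "m \<ge> 1"
  shows "prob (deviation_event m n j l) \<le> 2 * exp (- (2 / (real m)\<^sup>2) * real n)"
proof -
  have "prob (deviation_event m n j l) \<le> 2 * exp (- 2 * (real n / real m)\<^sup>2 / real n)"
    unfolding deviation_event_def by (rule hoeffding_count[OF assms(1,2)]) simp
  also have "- 2 * (real n / real m)\<^sup>2 / real n = - (2 / (real m)\<^sup>2) * real n"
    using assms by (simp add: power2_eq_square field_simps)
  finally show ?thesis .
qed

lemma prob_bad_event_le:
  assumes "m \<ge> 1"
  shows "prob (bad_event m n) \<le> real (p n) * real m * (2 * exp (- (2 / (real m)\<^sup>2) * real n))"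
proof (cases "0 < n")
  case False thus ?thesis unfolding bad_event_def by simp
next
  case True
  let ?b = "2 * exp (- (2 / (real m)\<^sup>2) * real n)"
  have "prob (bad_event m n) = prob (\<Union>j\<in>{..<p n}. \<Union>l\<in>{1..<m}. deviation_event m n j l)" unfolding bad_event_def using True by simp
  also have "\<dots> \<le> (\<Sum>j<p n. prob (\<Union>l\<in>{1..<m}. deviation_event m n j l))"
    by (rule measure_UNION_le) (use deviation_event_sets True in auto)
  also have "\<dots> \<le> (\<Sum>j<p n. \<Sum>l\<in>{1..<m}. prob (deviation_event m n j l))"
    by (intro sum_mono measure_UNION_le) (use deviation_event_sets True in auto)
  also have "\<dots> \<le> (\<Sum>j<p n. \<Sum>l\<in>{1..<m}. ?b)"
    by (intro sum_mono prob_deviation_event_le) (use True assms in auto)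
  also have "\<dots> = real (p n) * (real (m - 1) * ?b)" by simp
  also have "\<dots> \<le> real (p n) * (real m * ?b)"
    by (intro mult_left_mono mult_right_mono) auto
  finally show ?thesis by (simp add: mult.assoc)
qed

lemma ecdf_mono: "s \<le> t \<Longrightarrow> ecdf n j \<omega> s \<le> ecdf n j \<omega> t"
  unfolding ecdf_def by (intro divide_right_mono) (auto intro!: card_mono)

lemma ecdf_bounds: "0 \<le> ecdf n j \<omega> t \<and> ecdf n j \<omega> t \<le> 1"
proof -
  have "card {k. k < n \<and> X n k j \<omega> \<le> t} \<le> card {..<n}" by (intro card_mono) auto
  thus ?thesis unfolding ecdf_def by (cases "n = 0") (auto simp: divide_le_eq_1)
qed

lemma summable_prob_bad_event:
  assumes m: "m \<ge> 1" and B: "\<And>n. 0 < n \<Longrightarrow> real (p n) \<le> B * real n"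
  shows "summable (\<lambda>n. prob (bad_event m n))"
proof (rule summable_comparison_test'[where N = 1])
  show "summable (\<lambda>n. B * real m * 2 * (real n * exp (- (2 / (real m)\<^sup>2) * real n)))"
    using m by (intro summable_mult summable_of_nat_mult_exp) simp
  fix n :: nat assume "1 \<le> n"
  have "norm (prob (bad_event m n)) \<le> real (p n) * real m * (2 * exp (- (2 / (real m)\<^sup>2) * real n))"
    using prob_bad_event_le[OF m] by simp
  also have "\<dots> \<le> (B * real n) * real m * (2 * exp (- (2 / (real m)\<^sup>2) * real n))"
    by (intro mult_right_mono B) (use \<open>1 \<le> n\<close> in auto)
  finally show "norm (prob (bad_event m n)) \<le> B * real m * 2 * (real n * exp (- (2 / (real m)\<^sup>2) * real n))"
    by (simp add: ac_simps)
qed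

lemma ecdf_close_outside_bad_event:
  assumes m: "m \<ge> 1" and n: "0 < n" and \<omega>: "\<omega> \<in> space M" "\<omega> \<notin> bad_event m n" and j: "j < p n"
  shows "\<bar>ecdf n j \<omega> t - F n j t\<bar> \<le> 2 / real m"
proof (rule grid_close_uniform[OF m, of "F n j" "ecdf n j \<omega>" "grid_point m n j"])
  fix l assume l: "1 \<le> l" "l < m"
  have "\<omega> \<notin> deviation_event m n j l" using \<omega> n j l unfolding bad_event_def by auto
  hence "\<bar>real n * ecdf n j \<omega> (grid_point m n j l) - real n * F n j (grid_point m n j l)\<bar> < real n / real m"
    using \<omega> n unfolding deviation_event_def ecdf_def by (simp add: sum_indicator_eq_card)
  hence "real n * \<bar>ecdf n j \<omega> (grid_point m n j l) - F n j (grid_point m n j l)\<bar> < real n * (1 / real m)"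
    by (simp add: abs_mult flip: right_diff_distrib)
  thus "\<bar>ecdf n j \<omega> (grid_point m n j l) - F n j (grid_point m n j l)\<bar> \<le> 1 / real m"
    using n by (metis mult_less_cancel_left_pos of_nat_0_less_iff less_imp_le)
qed (use F_mono[OF n j] ecdf_mono F_bounds[OF n j] ecdf_bounds grid_point_first_hit[OF n j] in auto)

lemma AE_ecdf_uniform_close:
  assumes m: "m \<ge> 1" and B: "\<And>n. 0 < n \<Longrightarrow> real (p n) \<le> B * real n"
  shows "AE \<omega> in M. eventually (\<lambda>n. \<forall>j<p n. \<forall>t. \<bar>ecdf n j \<omega> t - F n j t\<bar> \<le> 2 / real m) sequentially"
proof -
  have "AE \<omega> in M. eventually (\<lambda>n. \<omega> \<in> space M - bad_event m n) sequentially"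
    using summable_prob_bad_event[OF assms]
    by (intro borel_cantelli_AE1 bad_event_sets) (auto simp: emeasure_eq_measure)
  thus ?thesis
  proof (rule AE_mp, intro AE_I2 impI)
    fix \<omega> assume "eventually (\<lambda>n. \<omega> \<in> space M - bad_event m n) sequentially"
    with eventually_gt_at_top[of 0]
    show "eventually (\<lambda>n. \<forall>j<p n. \<forall>t. \<bar>ecdf n j \<omega> t - F n j t\<bar> \<le> 2 / real m) sequentially"
      by eventually_elim (use ecdf_close_outside_bad_event[OF m] in blast)
  qed
qed

lemma AE_ecdf_uniform_tendsto:
  assumes B: "\<And>n. 0 < n \<Longrightarrow> real (p n) \<le> B * real n"
  shows "AE \<omega> in M. \<forall>\<delta>>0. eventually (\<lambda>n. \<forall>j<p n. \<forall>t. \<bar>ecdf n j \<omega> t - F n j t\<bar> \<le> \<delta>) sequentially"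
proof -
  have "AE \<omega> in M. \<forall>m. eventually (\<lambda>n. \<forall>j<p n. \<forall>t. \<bar>ecdf n j \<omega> t - F n j t\<bar> \<le> 2 / real (Suc m)) sequentially"
    unfolding AE_all_countable using AE_ecdf_uniform_close[of "Suc _" B] B by auto
  thus ?thesis
  proof (rule AE_mp, intro AE_I2 impI allI)
    fix \<omega> and \<delta> :: real
    assume close: "\<forall>m. eventually (\<lambda>n. \<forall>j<p n. \<forall>t. \<bar>ecdf n j \<omega> t - F n j t\<bar> \<le> 2 / real (Suc m)) sequentially"
    assume "\<delta> > 0"
    then obtain m :: nat where "2 / \<delta> < real m" using reals_Archimedean2 by blast
    hence "2 / real (Suc m) \<le> \<delta>" using \<open>\<delta> > 0\<close> by (simp add: field_simps)
    thus "eventually (\<lambda>n. \<forall>j<p n. \<forall>t. \<bar>ecdf n j \<omega> t - F n j t\<bar> \<le> \<delta>) sequentially"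
      by (intro eventually_mono[OF close[rule_format, of m]]) (blast intro: order_trans)
  qed
qed

end

section \<open>Spearman's matrix and \<open>W\<^sub>n\<close> as Gram matrices\<close>

lemma rank_ij_eq_card:
  assumes i: "i < n"
  shows "rank_ij n x i j = real (card {k. k < n \<and> x k j \<le> x i j})"
proof -
  have "{k. k < n \<and> x k j \<le> x i j} = insert i {k. k < n \<and> k \<noteq> i \<and> x k j \<le> x i j}" using i by auto
  hence "card {k. k < n \<and> x k j \<le> x i j} = Suc (card {k. k < n \<and> k \<noteq> i \<and> x k j \<le> x i j})"
    by simp
  thus ?thesis unfolding rank_ij_def by simp
qed

lemma rank_ij_bounds:
  assumes i: "i < n"
  shows "1 \<le> rank_ij n x i j \<and> rank_ij n x i j \<le> real n"
proof -
  have "card {k. k < n \<and> x k j \<le> x i j} \<le> card {..<n}" by (intro card_mono) auto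
  moreover have "0 < card {k. k < n \<and> x k j \<le> x i j}"
    using i by (subst card_gt_0_iff) auto
  ultimately show ?thesis unfolding rank_ij_eq_card[OF i] by simp
qed

definition rank_entries :: "nat \<Rightarrow> nat \<Rightarrow> (nat \<Rightarrow> nat \<Rightarrow> real) \<Rightarrow> nat \<Rightarrow> nat \<Rightarrow> real" where
  "rank_entries n p x i j = rank_mat n p x $$ (i,j) / sqrt (real n)"

definition W_entries :: "nat \<Rightarrow> (nat \<Rightarrow> real \<Rightarrow> real) \<Rightarrow> (nat \<Rightarrow> nat \<Rightarrow> real) \<Rightarrow> nat \<Rightarrow> nat \<Rightarrow> real" where
  "W_entries n G x i j = sqrt (3 / real n) * (2 * G j (x i j) - 1)"

lemma spearman_eq_gram_mat:
  assumes n: "n > 0"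
  shows "spearman n p x = gram_mat n p (rank_entries n p x)"
proof (rule eq_matI)
  fix j l assume "j < dim_row (gram_mat n p (rank_entries n p x))" "l < dim_col (gram_mat n p (rank_entries n p x))"
  hence j: "j < p" and l: "l < p" by (auto simp: gram_mat_def)
  have R: "rank_mat n p x \<in> carrier_mat n p" unfolding rank_mat_def by auto
  have "spearman n p x $$ (j,l) = (1 / real n) * (\<Sum>i<n. rank_mat n p x $$ (i,j) * rank_mat n p x $$ (i,l))"
    unfolding spearman_def using R j l by (simp add: scalar_prod_def lessThan_atLeast0)
  also have "\<dots> = gram_mat n p (rank_entries n p x) $$ (j,l)"
    unfolding gram_mat_def gram_def rank_entries_def using n j l by (simp add: sum_distrib_left field_simps)
  finally show "spearman n p x $$ (j,l) = gram_mat n p (rank_entries n p x) $$ (j,l)" .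
qed (auto simp: spearman_def rank_mat_def gram_mat_def)

lemma W_mat_eq_gram_mat: "W_mat n p G x = gram_mat n p (W_entries n G x)"
proof -
  have "sqrt (3 / real n) * u * (sqrt (3 / real n) * v) = 3 / real n * (u * v)" for u v :: real
    by (metis (no_types) mult.assoc mult.left_commute real_sqrt_mult_self abs_of_nonneg
        divide_nonneg_nonneg of_nat_0_le_iff zero_le_numeral)
  thus ?thesis
    unfolding W_mat_def gram_mat_def gram_def W_entries_def by (simp add: sum_distrib_left)
qed

text \<open>\<open>rank_mat\<close> standardizes with the factor \<open>rank_scale n\<close>; since \<open>n \<cdot> rank_scale n \<rightarrow> \<surd>12\<close>,
  a standardized rank \<open>rank_scale n (r - (n + 1) / 2)\<close> is close to \<open>\<surd>3 (2 r / n - 1)\<close>, and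
  \<open>rank_scale_error n\<close> bounds the discrepancy.\<close>

definition rank_scale :: "nat \<Rightarrow> real" where
  "rank_scale n = sqrt (12 / ((real n)\<^sup>2 - 1))"

definition rank_scale_error :: "nat \<Rightarrow> real" where
  "rank_scale_error n = \<bar>rank_scale n * real n - sqrt 12\<bar> + rank_scale n"

lemma rank_scale_error_tendsto: "rank_scale_error \<longlonglongrightarrow> 0"
proof -
  have "(\<lambda>n. rank_scale n * real n) \<longlonglongrightarrow> 12 powr (1/2)" and "rank_scale \<longlonglongrightarrow> 0"
    unfolding rank_scale_def by real_asymp+
  hence "(\<lambda>n. \<bar>rank_scale n * real n - sqrt 12\<bar> + rank_scale n) \<longlonglongrightarrow> \<bar>sqrt 12 - sqrt 12\<bar> + 0"
    by (intro tendsto_intros) (simp_all add: powr_half_sqrt)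
  thus ?thesis unfolding rank_scale_error_def by simp
qed

lemma rank_scale_bounds:
  assumes "n \<ge> 2"
  shows "rank_scale n * real n \<le> 4" "rank_scale n \<ge> 0"
proof -
  have r2: "real n \<ge> 2" using assms by simp
  have "real n * real n \<ge> 2 * 2" by (rule mult_mono) (use r2 in auto)
  hence n2: "(real n)\<^sup>2 \<ge> 4" unfolding power2_eq_square by simp
  define a where "a = (real n)\<^sup>2 - 1"
  have a: "a > 0" unfolding a_def using n2 by linarith
  have q: "12 / a > 0" using a by simp
  show "rank_scale n \<ge> 0" unfolding rank_scale_def a_def[symmetric] using q by simp
  have "rank_scale n * real n = sqrt (12 / a) * sqrt ((real n)\<^sup>2)" unfolding rank_scale_def a_def by simp
  also have "\<dots> = sqrt (12 / a * (real n)\<^sup>2)" by (rule real_sqrt_mult[symmetric])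
  also have "\<dots> \<le> sqrt 16"
  proof (rule real_sqrt_le_mono)
    have "12 * (real n)\<^sup>2 \<le> 16 * a" unfolding a_def using n2 by (simp add: algebra_simps)
    hence "12 * (real n)\<^sup>2 / a \<le> 16" using a by (simp add: pos_divide_le_eq)
    thus "12 / a * (real n)\<^sup>2 \<le> 16" by simp
  qed
  also have "sqrt 16 = (4::real)" by (simp add: real_sqrt_eq_iff)
  finally show "rank_scale n * real n \<le> 4" .
qed

lemma power2_le_of_abs_le:
  fixes x y :: "'a :: linordered_idom"
  shows "\<bar>x\<bar> \<le> y \<Longrightarrow> x\<^sup>2 \<le> y\<^sup>2"
  using power2_le_iff_abs_le[of y x] by force

lemma rank_scale_sq:
  assumes "n \<ge> 2"
  shows "real n > 0" "(real n)\<^sup>2 - 1 > 0" "(rank_scale n)\<^sup>2 = 12 / ((real n)\<^sup>2 - 1)"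
proof -
  show "real n > 0" using assms by simp
  have r2: "real n \<ge> 2" using assms by simp
  have "real n * real n \<ge> 2 * 2" by (rule mult_mono) (use r2 in auto)
  thus a: "(real n)\<^sup>2 - 1 > 0" unfolding power2_eq_square by simp
  show "(rank_scale n)\<^sup>2 = 12 / ((real n)\<^sup>2 - 1)" unfolding rank_scale_def using a by simp
qed

lemma rank_entry_sq_le:
  assumes n2: "n \<ge> 2" and r: "1 \<le> r" "r \<le> real n"
  shows "(rank_scale n * (r - (real n + 1) / 2) / sqrt (real n))\<^sup>2 \<le> 3 / real n"
proof -
  note nf = rank_scale_sq[OF n2]
  have D: "(r - (real n + 1) / 2)\<^sup>2 \<le> ((real n - 1) / 2)\<^sup>2"
  proof (rule power2_le_of_abs_le)
    show "\<bar>r - (real n + 1) / 2\<bar> \<le> (real n - 1) / 2" unfolding abs_le_iff using r by (auto simp: field_simps)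
  qed
  have "(rank_scale n * (r - (real n + 1) / 2) / sqrt (real n))\<^sup>2 = (rank_scale n)\<^sup>2 * (r - (real n + 1) / 2)\<^sup>2 / real n"
    using nf by (simp add: power_divide power_mult_distrib)
  also have "\<dots> \<le> (rank_scale n)\<^sup>2 * ((real n - 1) / 2)\<^sup>2 / real n"
    using D nf by (intro divide_right_mono mult_left_mono) auto
  also have "(rank_scale n)\<^sup>2 * ((real n - 1) / 2)\<^sup>2 \<le> 3"
  proof -
    have "(rank_scale n)\<^sup>2 * ((real n - 1) / 2)\<^sup>2 = 3 * (real n - 1)\<^sup>2 / ((real n)\<^sup>2 - 1)"
    proof -
      have "(real n)\<^sup>2 * 4 - 4 \<noteq> 0" using nf(2) by simp
      thus ?thesis unfolding nf(3) using nf(2) by (simp add: power_divide field_simps)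
    qed
    also have "\<dots> \<le> 3"
    proof -
      have "3 * (real n - 1)\<^sup>2 \<le> 3 * ((real n)\<^sup>2 - 1)"
        using n2 by (simp add: power2_eq_square algebra_simps)
      thus ?thesis using nf(2) by (simp add: pos_divide_le_eq)
    qed
    finally show ?thesis .
  qed
  hence "(rank_scale n)\<^sup>2 * ((real n - 1) / 2)\<^sup>2 / real n \<le> 3 / real n"
    using nf by (intro divide_right_mono) auto
  finally show ?thesis .
qed

lemma W_entry_sq_le:
  assumes "0 \<le> g" "g \<le> 1"
  shows "(sqrt (3 / real n) * (2 * g - 1))\<^sup>2 \<le> 3 / real n"
proof -
  have "(2 * g - 1)\<^sup>2 \<le> 1\<^sup>2" by (rule power2_le_of_abs_le) (use assms in auto)
  hence "3 / real n * (2 * g - 1)\<^sup>2 \<le> 3 / real n * 1" by (intro mult_left_mono) auto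
  thus ?thesis by (simp add: power_mult_distrib)
qed

lemma rank_W_entry_diff_eq:
  assumes n2: "n \<ge> 2"
  shows "rank_scale n * (r - (real n + 1) / 2) / sqrt (real n) - sqrt (3 / real n) * (2 * g - 1)
       = (rank_scale n * real n * (r / real n - g) + (rank_scale n * real n - sqrt 12) * (g - 1/2)
          - rank_scale n / 2) / sqrt (real n)"
proof -
  have "sqrt (4 * 3) = sqrt 4 * sqrt (3::real)" by (rule real_sqrt_mult)
  moreover have "sqrt 4 = (2::real)" by (simp add: real_sqrt_eq_iff)
  ultimately have "sqrt 12 = 2 * sqrt (3::real)" by simp
  thus ?thesis using n2 by (simp add: real_sqrt_divide field_simps)
qed

lemma rank_W_entry_diff_sq_le:
  assumes n2: "n \<ge> 2" and g: "0 \<le> g" "g \<le> 1" and close: "\<bar>r / real n - g\<bar> \<le> \<Delta>"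
  shows "(rank_scale n * (r - (real n + 1) / 2) / sqrt (real n) - sqrt (3 / real n) * (2 * g - 1))\<^sup>2
         \<le> (4 * \<Delta> + rank_scale_error n)\<^sup>2 / real n"
proof -
  note sb = rank_scale_bounds[OF n2]
  define a where "a = \<bar>rank_scale n * real n - sqrt 12\<bar>"
  have X: "\<bar>rank_scale n * real n * (r / real n - g)\<bar> \<le> 4 * \<Delta>"
    using close sb by (simp add: abs_mult) (intro mult_mono, auto)
  have "\<bar>g - 1/2\<bar> \<le> 1/2" using g by arith
  hence Y: "\<bar>(rank_scale n * real n - sqrt 12) * (g - 1/2)\<bar> \<le> a * (1/2)"
    unfolding a_def abs_mult by (intro mult_left_mono) auto
  have "\<bar>rank_scale n * real n * (r / real n - g) + (rank_scale n * real n - sqrt 12) * (g - 1/2)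
          - rank_scale n / 2\<bar> \<le> 4 * \<Delta> + rank_scale_error n"
  proof -
    have "\<bar>X + Y - s / 2\<bar> \<le> 4 * \<Delta> + (a + s)"
      if "\<bar>X\<bar> \<le> 4 * \<Delta>" "\<bar>Y\<bar> \<le> a * (1/2)" "0 \<le> s" "0 \<le> a" for X Y s :: real
      using that by arith
    thus ?thesis using X Y sb unfolding rank_scale_error_def a_def[symmetric] by (simp add: a_def)
  qed
  hence "(rank_scale n * real n * (r / real n - g) + (rank_scale n * real n - sqrt 12) * (g - 1/2)
          - rank_scale n / 2)\<^sup>2 / real n \<le> (4 * \<Delta> + rank_scale_error n)\<^sup>2 / real n"
    by (intro divide_right_mono power2_le_of_abs_le) auto
  thus ?thesis unfolding rank_W_entry_diff_eq[OF n2] using n2 by (simp add: power_divide)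
qed



lemma double_sum_le:
  assumes "\<And>i j. i < n \<Longrightarrow> j < p \<Longrightarrow> f i j \<le> K / real n" and "n > 0"
  shows "(\<Sum>i<n. \<Sum>j<p. f i j) \<le> K * real p"
proof -
  have "(\<Sum>i<n. \<Sum>j<p. f i j) \<le> (\<Sum>i<n. \<Sum>j<p. K / real n)"
    by (intro sum_mono) (use assms in auto)
  also have "\<dots> = K * real p" using assms(2) by simp
  finally show ?thesis .
qed

lemma frobenius_bounds:
  fixes x :: "nat \<Rightarrow> nat \<Rightarrow> real" and G :: "nat \<Rightarrow> real \<Rightarrow> real"
  assumes n2: "n \<ge> 2"
    and G_bounds: "\<And>j t. j < p \<Longrightarrow> 0 \<le> G j t \<and> G j t \<le> 1"
    and close: "\<And>i j. i < n \<Longrightarrow> j < p \<Longrightarrow>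
                  \<bar>real (card {k. k < n \<and> x k j \<le> x i j}) / real n - G j (x i j)\<bar> \<le> \<Delta>"
  shows "(\<Sum>i<n. \<Sum>j<p. (rank_entries n p x i j)\<^sup>2) \<le> 3 * real p"
    and "(\<Sum>i<n. \<Sum>j<p. (W_entries n G x i j)\<^sup>2) \<le> 3 * real p"
    and "(\<Sum>i<n. \<Sum>j<p. (rank_entries n p x i j - W_entries n G x i j)\<^sup>2)
           \<le> (4 * \<Delta> + rank_scale_error n)\<^sup>2 * real p"
proof -
  have n: "n > 0" using n2 by simp
  have R: "rank_entries n p x i j = rank_scale n * (rank_ij n x i j - (real n + 1) / 2) / sqrt (real n)"
    if "i < n" "j < p" for i j
    unfolding rank_entries_def rank_mat_def rank_scale_def using that by simp
  show "(\<Sum>i<n. \<Sum>j<p. (rank_entries n p x i j)\<^sup>2) \<le> 3 * real p"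
    by (rule double_sum_le[OF _ n]) (use R rank_entry_sq_le[OF n2] rank_ij_bounds in auto)
  show "(\<Sum>i<n. \<Sum>j<p. (W_entries n G x i j)\<^sup>2) \<le> 3 * real p"
    by (rule double_sum_le[OF _ n]) (use W_entry_sq_le G_bounds in \<open>auto simp: W_entries_def\<close>)
  show "(\<Sum>i<n. \<Sum>j<p. (rank_entries n p x i j - W_entries n G x i j)\<^sup>2)
           \<le> (4 * \<Delta> + rank_scale_error n)\<^sup>2 * real p"
  proof (rule double_sum_le[OF _ n])
    fix i j assume i: "i < n" and j: "j < p"
    have "\<bar>rank_ij n x i j / real n - G j (x i j)\<bar> \<le> \<Delta>" using close[OF i j] rank_ij_eq_card[OF i] by simp
    thus "(rank_entries n p x i j - W_entries n G x i j)\<^sup>2 \<le> (4 * \<Delta> + rank_scale_error n)\<^sup>2 / real n"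
      unfolding R[OF i j] W_entries_def using rank_W_entry_diff_sq_le[OF n2] G_bounds[OF j] by blast
  qed
qed

lemma levy_dist_spearman_W_le:
  fixes x :: "nat \<Rightarrow> nat \<Rightarrow> real" and G :: "nat \<Rightarrow> real \<Rightarrow> real"
  assumes n2: "n \<ge> 2" and p: "p > 0" and \<epsilon>: "\<epsilon> > 0"
    and G_bounds: "\<And>j t. j < p \<Longrightarrow> 0 \<le> G j t \<and> G j t \<le> 1"
    and close: "\<And>i j. i < n \<Longrightarrow> j < p \<Longrightarrow>
                  \<bar>real (card {k. k < n \<and> x k j \<le> x i j}) / real n - G j (x i j)\<bar> \<le> \<Delta>"
    and small: "4 * \<Delta> + rank_scale_error n \<le> \<epsilon>\<^sup>2 / 7"
  shows "0 \<le> levy_dist (esd (spearman n p x)) (esd (W_mat n p G x))"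
    and "levy_dist (esd (spearman n p x)) (esd (W_mat n p G x)) \<le> \<epsilon>"
proof -
  note frob = frobenius_bounds[where n=n and p=p and x=x and G=G and \<Delta>=\<Delta>, OF n2 G_bounds close]
  have "0 \<le> \<Delta>" using close[of 0 0] n2 p by (meson abs_ge_zero order_trans pos2 order_less_le_trans)
  moreover have "0 \<le> rank_scale_error n" unfolding rank_scale_error_def using rank_scale_bounds[OF n2] by simp
  ultimately have "(4 * \<Delta> + rank_scale_error n)\<^sup>2 \<le> (\<epsilon>\<^sup>2 / 7)\<^sup>2"
    using small by (intro power_mono) auto
  also have "\<dots> \<le> \<epsilon>^4 / (16 * 3)" by (simp add: power_divide flip: power_mult)
  finally have "(4 * \<Delta> + rank_scale_error n)\<^sup>2 * real p \<le> \<epsilon>^4 / (16 * 3) * real p"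
    by (rule mult_right_mono) simp
  hence "(\<Sum>i<n. \<Sum>j<p. (rank_entries n p x i j - W_entries n G x i j)\<^sup>2) \<le> \<epsilon>^4 * real p / (16 * 3)"
    using frob(3) by simp
  note levy = levy_dist_esd_gram_mat_le[OF p _ \<epsilon> frob(1,2) this]
  show "0 \<le> levy_dist (esd (spearman n p x)) (esd (W_mat n p G x))"
    and "levy_dist (esd (spearman n p x)) (esd (W_mat n p G x)) \<le> \<epsilon>"
    using levy n2 by (simp_all add: spearman_eq_gram_mat W_mat_eq_gram_mat)
qed

lemma levy_dist_spearman_W_tendsto:
  fixes x :: "nat \<Rightarrow> nat \<Rightarrow> nat \<Rightarrow> real" and G :: "nat \<Rightarrow> nat \<Rightarrow> real \<Rightarrow> real"
  assumes G_bounds: "\<And>n j t. 0 < n \<Longrightarrow> j < p n \<Longrightarrow> 0 \<le> G n j t \<and> G n j t \<le> 1"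
    and p: "eventually (\<lambda>n. 0 < p n) sequentially"
    and close: "\<And>\<delta>. \<delta> > 0 \<Longrightarrow> eventually (\<lambda>n. \<forall>i<n. \<forall>j<p n.
                  \<bar>real (card {k. k < n \<and> x n k j \<le> x n i j}) / real n - G n j (x n i j)\<bar> \<le> \<delta>) sequentially"
  shows "(\<lambda>n. levy_dist (esd (spearman n (p n) (x n))) (esd (W_mat n (p n) (G n) (x n)))) \<longlonglongrightarrow> 0"
proof (rule tendstoI)
  fix e :: real assume "e > 0"
  define \<epsilon> where "\<epsilon> = e / 2"
  have \<epsilon>: "\<epsilon> > 0" "\<epsilon> < e" unfolding \<epsilon>_def using \<open>e > 0\<close> by auto
  have "eventually (\<lambda>n. rank_scale_error n < \<epsilon>\<^sup>2 / 14) sequentially"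
    using rank_scale_error_tendsto \<epsilon> by (intro order_tendstoD(2)) auto
  moreover have "\<epsilon>\<^sup>2 / 56 > 0" using \<epsilon> by simp
  note close[OF this]
  ultimately show "eventually (\<lambda>n. dist (levy_dist (esd (spearman n (p n) (x n)))
                     (esd (W_mat n (p n) (G n) (x n)))) 0 < e) sequentially"
    using p eventually_ge_at_top[of 2]
  proof eventually_elim
    case (elim n)
    note levy = levy_dist_spearman_W_le[of n "p n" \<epsilon> "G n" "x n" "\<epsilon>\<^sup>2 / 56"]
    show ?case using levy elim \<epsilon> G_bounds[of n] by auto
  qed
qed

theorem theorem2:
  fixes M :: "'a measure"
    and p :: "nat \<Rightarrow> nat"
    and X :: "nat \<Rightarrow> nat \<Rightarrow> nat \<Rightarrow> 'a \<Rightarrow> real"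
    and F :: "nat \<Rightarrow> nat \<Rightarrow> real \<Rightarrow> real"
    and y :: real
  assumes "prob_space M"
    and indep: "\<And>n. prob_space.indep_vars M (\<lambda>_. PiM {..<p n} (\<lambda>_. borel))
                   (\<lambda>i \<omega>. \<lambda>j\<in>{..<p n}. X n i j \<omega>) {..<n}"
    and ident: "\<And>n i. i < n \<Longrightarrow>
                 distr M (PiM {..<p n} (\<lambda>_. borel)) (\<lambda>\<omega>. \<lambda>j\<in>{..<p n}. X n i j \<omega>) =
                 distr M (PiM {..<p n} (\<lambda>_. borel)) (\<lambda>\<omega>. \<lambda>j\<in>{..<p n}. X n 0 j \<omega>)"
    and marg: "\<And>n i j t. i < n \<Longrightarrow> j < p n \<Longrightarrow>
                 measure M {\<omega> \<in> space M. X n i j \<omega> \<le> t} = F n j t"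
    and cont: "\<And>n j. j < p n \<Longrightarrow> continuous_on UNIV (F n j)"
    and y_pos: "0 < y"
    and ratio: "(\<lambda>n. real (p n) / real n) \<longlonglongrightarrow> y"
  shows "AE \<omega> in M. (\<lambda>n. levy_dist
            (esd (spearman n (p n) (\<lambda>i j. X n i j \<omega>)))
            (esd (W_mat n (p n) (F n) (\<lambda>i j. X n i j \<omega>)))) \<longlonglongrightarrow> 0"
proof -
  interpret sample_array M p X F
    using assms(1) indep marg cont by (simp add: sample_array_def sample_array_axioms_def)
  obtain B where "\<And>n. \<bar>real (p n) / real n\<bar> \<le> B"
    using convergent_imp_bounded[OF ratio] unfolding bounded_iff by auto
  hence "real (p n) \<le> B * real n" if "0 < n" for n
    using that by (simp add: divide_le_eq)
  hence close: "AE \<omega> in M. \<forall>\<delta>>0. eventually (\<lambda>n. \<forall>j<p n. \<forall>t. \<bar>ecdf n j \<omega> t - F n j t\<bar> \<le> \<delta>) sequentially"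
    by (rule AE_ecdf_uniform_tendsto)
  have "eventually (\<lambda>n. y / 2 < real (p n) / real n) sequentially"
    using ratio y_pos by (intro order_tendstoD(1)) auto
  hence p: "eventually (\<lambda>n. 0 < p n) sequentially"
    by (rule eventually_mono) (use y_pos in \<open>auto intro: Nat.gr0I\<close>)
  show ?thesis
    using close
  proof (rule AE_mp, intro AE_I2 impI)
    fix \<omega> assume "\<forall>\<delta>>0. eventually (\<lambda>n. \<forall>j<p n. \<forall>t. \<bar>ecdf n j \<omega> t - F n j t\<bar> \<le> \<delta>) sequentially"
    thus "(\<lambda>n. levy_dist (esd (spearman n (p n) (\<lambda>i j. X n i j \<omega>)))
            (esd (W_mat n (p n) (F n) (\<lambda>i j. X n i j \<omega>)))) \<longlonglongrightarrow> 0"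
      by (intro levy_dist_spearman_W_tendsto[OF F_bounds p]) (auto simp: ecdf_def elim!: eventually_mono)
  qed
qed

end
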